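(* Consider the all-but-one private sequencing scheme described in the context, with constant coverage depth. Let $\beta\in(0,1)$. If for every SNP position $n\in[N]$ $$f(K)\;:=\;\frac{H\big(\mathrm{Bin}(M-1+K,p_n)\big)-H\big(\mathrm{Bin}(K,p_n)\big)}{M-1}\;\le\;\beta,$$ then the privacy condition holds: for every sequencer $s\in[S]$, $$\frac{I\big(X_{m,n},\ m\in\mathcal{A}^{(s)},\ n\in[N];\ \mathcal{R}^{(s)}\big)}{|\mathcal{A}^{(s)}|\,N}\le\beta.$$
   Context: Setting. There are $M\ge2$ unknown individuals, $K$ known individuals, $N$ SNP positions and $S=M$ non-colluding sequencers. The allele of unknown individual $m$ (resp. known individual $k$) at SNP position $n$ is a random variable $X_{m,n}\in\{-1,1\}$ (resp. $Y_{k,n}\in\{-1,1\}$), with value $1$ (major allele) with probability $p_n$ (the major allele frequency at position $n$) and $-1$ otherwise; all these variables are mutually independent. The known individuals' alleles are known to the data collector but not to the sequencers. In the all-but-one scheme, sequencer $s$ receives pooled, untagged fragments of all unknown individuals except individual $s$ and of all known individuals, so $\mathcal{A}^{(s)}=[M]\setminus\{s\}$ is the set of unknown individuals whose fragments are sent to sequencer $s$ ($|\mathcal{A}^{(s)}|=M-1$). Each fragment contains one SNP and is mapped to its position; every individual sent to a sequencer has the same constant coverage depth $\alpha$ at every SNP; each read allele is flipped independently with probability $\eta$. $\mathcal{R}^{(s)}$ denotes the set of reads obtained by sequencer $s$. Model used by the paper: $\mathcal{R}^{(s)}$ is equivalent to the collection $(q^{(s)}_n)_{n\in[N]}$ with $$q^{(s)}_n=\sum_{m\neq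 s}X_{m,n}+\sum_{k=1}^K Y_{k,n}+\tilde Z^{(s)}_n,$$ where $\tilde Z^{(s)}_n\sim\mathcal{N}(0,\sigma^2)$ are noise variables independent of everything else and of each other across $n$. $H(\cdot)$ is discrete (Shannon) entropy, $I(\cdot;\cdot)$ is mutual information, and $\mathrm{Bin}(a,p)$ is a binomial random variable with $a$ trials and success probability $p$. *)

theory Defs
  imports "HOL-Probability.Probability"
begin

text \<open>Shannon entropy (base 2) of the binomial distribution Bin(a,p).
  Its support is contained in {0..a}; terms with zero probability contribute 0
  since log 2 0 = 0 in Isabelle.\<close>
definition binom_entropy :: "nat \<Rightarrow> real \<Rightarrow> real" where
  "binom_entropy a p =
     - (\<Sum>k\<in>{0..a}. pmf (binomial_pmf a p) k * log 2 (pmf (binomial_pmf a p) k))"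

text \<open>Index type for the family of all random variables relevant to one sequencer:
  unknown alleles X m n, known alleles Y k n, noise variables Z n.\<close>
datatype rv_idx = Xi nat nat | Yi nat nat | Zi nat

end

(* At each SNP position the sequencer sees the sum of the (-1/1)-alleles of the M - 1 unknown and the
   K known individuals, plus noise independent of all alleles.  By data processing these reads carry
   at most as much information about the unknown alleles as the noise-free sums.  For these finitely
   valued variables the information is H(sums) - H(sums | unknown alleles).  Positions are independent;
   at each one the sum is an affine image of Bin(M - 1 + K, p_n), and once the unknown alleles are fixed
   only the known individuals' part, an affine image of Bin(K, p_n), is still random.  So the information
   is the sum over n of H(Bin(M - 1 + K, p_n)) - H(Bin(K, p_n)), which the hypothesis bounds by
   N (M - 1) beta.

   Data processing is proved directly: the joint law of unknown alleles and reads has a density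
   sum_u P(U = u | X = x) g_u(y) with respect to the product of the marginals, where g_u is the density of
   the reads given noise-free sums u, and the log-sum inequality bounds the Kullback-Leibler integrand. *)

theory Submission
  imports Defs
begin

section \<open>Logarithmic inequalities\<close>

lemma log_sum_inequality:
  fixes a c w :: "'i \<Rightarrow> real"
  assumes "finite I" and b: "1 < b"
    and a: "\<And>i. i \<in> I \<Longrightarrow> 0 \<le> a i" and c: "\<And>i. i \<in> I \<Longrightarrow> 0 \<le> c i"
    and w: "\<And>i. i \<in> I \<Longrightarrow> 0 < w i" and w_sum: "(\<Sum>i\<in>I. w i * c i) = 1"
  shows "(\<Sum>i\<in>I. a i * c i) * log b (\<Sum>i\<in>I. a i * c i) \<le> (\<Sum>i\<in>I. a i * c i * log b (a i / w i))"
proof -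
  define A where "A = (\<Sum>i\<in>I. a i * c i)"
  have "0 \<le> A" unfolding A_def using a c by (intro sum_nonneg) auto
  show ?thesis
  proof (cases "A = 0")
    case True
    then have "\<forall>i\<in>I. a i * c i = 0"
      using \<open>finite I\<close> a c unfolding A_def by (subst (asm) sum_nonneg_eq_0_iff) auto
    then have "(\<Sum>i\<in>I. a i * c i * log b (a i / w i)) = 0" by (intro sum.neutral) simp
    then show ?thesis using True unfolding A_def by simp
  next
    case False
    with \<open>0 \<le> A\<close> have "0 < A" by simp
    \<comment> \<open>\<open>ln t \<ge> 1 - 1 / t\<close> at \<open>t = a i / (w i * A)\<close>\<close>
    have termwise: "(a i * c i - w i * c i * A) / ln b \<le>
        a i * c i * log b (a i / w i) - a i * c i * log b A"
      if i: "i \<in> I" for i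
    proof (cases "a i * c i = 0")
      case True
      have "0 \<le> w i * c i * A" using w[OF i] c[OF i] \<open>0 < A\<close> by simp
      then have "(a i * c i - w i * c i * A) / ln b \<le> 0"
        using True b by (intro divide_nonpos_pos) auto
      moreover have "a i * c i * log b (a i / w i) - a i * c i * log b A = 0" using True by simp
      ultimately show ?thesis by linarith
    next
      case False
      then have "0 < a i" "0 < c i" using a[OF i] c[OF i] by (auto simp: less_le)
      define t where "t = a i / (w i * A)"
      have "0 < t" using \<open>0 < a i\<close> w[OF i] \<open>0 < A\<close> by (simp add: t_def)
      have "ln (1 / t) \<le> 1 / t - 1" using \<open>0 < t\<close> by (intro ln_le_minus_one) simp
      then have "a i * c i * (1 - 1 / t) \<le> a i * c i * ln t"
        using \<open>0 < t\<close> \<open>0 < a i\<close> \<open>0 < c i\<close> by (intro mult_left_mono) (auto simp: ln_div)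
      moreover have "a i * c i - w i * c i * A = a i * c i * (1 - 1 / t)"
        using \<open>0 < a i\<close> w[OF i] \<open>0 < A\<close> by (simp add: t_def field_simps)
      moreover have "log b (a i / w i) - log b A = ln t / ln b"
        using \<open>0 < a i\<close> w[OF i] \<open>0 < A\<close> b
        by (simp add: log_def t_def ln_div ln_mult diff_divide_distrib add_divide_distrib)
      ultimately show ?thesis using b
        by (simp add: right_diff_distrib[symmetric] divide_right_mono)
    qed
    have "(A - A * (\<Sum>i\<in>I. w i * c i)) / ln b = (\<Sum>i\<in>I. (a i * c i - w i * c i * A) / ln b)"
      unfolding A_def
      by (simp add: sum_divide_distrib[symmetric] sum_subtractf sum_distrib_left sum_distrib_right
          mult_ac)
    also have "\<dots> \<le> (\<Sum>i\<in>I. a i * c i * log b (a i / w i) - a i * c i * log b A)"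
      by (intro sum_mono termwise)
    also have "\<dots> = (\<Sum>i\<in>I. a i * c i * log b (a i / w i)) - A * log b A"
      unfolding A_def by (simp add: sum_subtractf sum_distrib_right)
    finally show ?thesis using w_sum unfolding A_def by simp
  qed
qed

lemma mult_log_ge_neg_inverse_ln:
  fixes x b :: real
  assumes "1 < b" "0 \<le> x"
  shows "- 1 / ln b \<le> x * log b x"
proof (cases "x = 0")
  case False
  with assms have "0 < x" by simp
  have "ln (1 / x) \<le> 1 / x - 1" using \<open>0 < x\<close> by (intro ln_le_minus_one) simp
  then have "x - 1 \<le> x * ln x" using \<open>0 < x\<close> by (simp add: ln_div field_simps)
  then have "(x - 1) / ln b \<le> x * ln x / ln b" using assms by (intro divide_right_mono) auto
  moreover have "- 1 / ln b \<le> (x - 1) / ln b" using assms \<open>0 < x\<close> by (intro divide_right_mono) auto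
  ultimately show ?thesis by (simp add: log_def)
qed (use assms in simp)

section \<open>Finite-valued random variables\<close>

lemma sum_indicator_fibres:
  fixes g :: "'b \<Rightarrow> 'c::comm_semiring_1"
  assumes "finite F" "\<omega> \<in> \<Omega>" "f \<omega> \<in> F"
  shows "(\<Sum>a\<in>F. indicator {\<omega>\<in>\<Omega>. f \<omega> = a} \<omega> * g a) = g (f \<omega>)"
proof -
  have "(\<Sum>a\<in>F. indicator {\<omega>\<in>\<Omega>. f \<omega> = a} \<omega> * g a) = (\<Sum>a\<in>F. if a = f \<omega> then g a else 0)"
    using assms(2) by (intro sum.cong) (auto simp: indicator_def)
  then show ?thesis using assms(1,3) by (simp add: sum.delta')
qed

context prob_space
begin

lemma integrable_finite_valued:
  fixes g :: "'b \<Rightarrow> real"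
  assumes "finite F" "\<And>\<omega>. \<omega> \<in> space M \<Longrightarrow> f \<omega> \<in> F"
    and "\<And>a. a \<in> F \<Longrightarrow> {\<omega>\<in>space M. f \<omega> = a} \<in> events"
  shows "integrable M (\<lambda>\<omega>. g (f \<omega>))"
proof -
  have "integrable M (\<lambda>\<omega>. \<Sum>a\<in>F. indicator {\<omega>\<in>space M. f \<omega> = a} \<omega> * g a)"
    using assms(3)
    by (intro Bochner_Integration.integrable_sum integrable_real_indicator integrable_mult_left)
      (auto simp: less_top[symmetric])
  moreover have "(\<Sum>a\<in>F. indicator {\<omega>\<in>space M. f \<omega> = a} \<omega> * g a) = g (f \<omega>)"
    if "\<omega> \<in> space M" for \<omega>
    by (intro sum_indicator_fibres assms that)
  ultimately show ?thesis
    by (simp cong: Bochner_Integration.integrable_cong)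
qed

lemma integral_finite_valued:
  fixes g :: "'b \<Rightarrow> real"
  assumes "finite F" "\<And>\<omega>. \<omega> \<in> space M \<Longrightarrow> f \<omega> \<in> F"
    and "\<And>a. a \<in> F \<Longrightarrow> {\<omega>\<in>space M. f \<omega> = a} \<in> events"
  shows "(\<integral>\<omega>. g (f \<omega>) \<partial>M) = (\<Sum>a\<in>F. prob {\<omega>\<in>space M. f \<omega> = a} * g a)"
proof -
  have "(\<integral>\<omega>. g (f \<omega>) \<partial>M) = (\<integral>\<omega>. (\<Sum>a\<in>F. indicator {\<omega>\<in>space M. f \<omega> = a} \<omega> * g a) \<partial>M)"
    by (intro Bochner_Integration.integral_cong sum_indicator_fibres[symmetric] assms) auto
  also have "\<dots> = (\<Sum>a\<in>F. prob {\<omega>\<in>space M. f \<omega> = a} * g a)"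
    using assms(3)
    by (subst Bochner_Integration.integral_sum)
      (auto intro!: integrable_mult_left integrable_real_indicator simp: less_top[symmetric])
  finally show ?thesis .
qed

lemma prob_eq_sum_fibres:
  assumes "finite F" "\<And>\<omega>. \<omega> \<in> space M \<Longrightarrow> f \<omega> \<in> F"
    and "\<And>a. a \<in> F \<Longrightarrow> {\<omega>\<in>space M. P \<omega> \<and> f \<omega> = a} \<in> events"
  shows "prob {\<omega>\<in>space M. P \<omega>} = (\<Sum>a\<in>F. prob {\<omega>\<in>space M. P \<omega> \<and> f \<omega> = a})"
proof -
  have "{\<omega>\<in>space M. P \<omega>} = (\<Union>a\<in>F. {\<omega>\<in>space M. P \<omega> \<and> f \<omega> = a})"
    using assms(2) by auto
  then have "prob {\<omega>\<in>space M. P \<omega>} = prob (\<Union>a\<in>F. {\<omega>\<in>space M. P \<omega> \<and> f \<omega> = a})"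
    by simp
  also have "\<dots> = (\<Sum>a\<in>F. prob {\<omega>\<in>space M. P \<omega> \<and> f \<omega> = a})"
    using assms(1,3) by (intro finite_measure_finite_Union) (auto simp: disjoint_family_on_def)
  finally show ?thesis .
qed

lemma integral_pair_distr_finite_valued:
  fixes H :: "'x \<times> 'y \<Rightarrow> real"
  assumes [measurable]: "\<xi> \<in> measurable M S" and "finite F" "\<And>\<omega>. \<omega> \<in> space M \<Longrightarrow> \<xi> \<omega> \<in> F"
    and singletons: "\<And>x. x \<in> F \<Longrightarrow> {x} \<in> sets S"
    and "sigma_finite_measure N" and H[measurable]: "H \<in> borel_measurable (S \<Otimes>\<^sub>M N)"
    and H_int: "\<And>x. x \<in> F \<Longrightarrow> integrable N (\<lambda>y. H (x, y))"
  shows "integrable (distr M S \<xi> \<Otimes>\<^sub>M N) H"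
    and "(\<integral>z. H z \<partial>(distr M S \<xi> \<Otimes>\<^sub>M N)) = (\<Sum>x\<in>F. prob {\<omega>\<in>space M. \<xi> \<omega> = x} * (\<integral>y. H (x, y) \<partial>N))"
proof -
  interpret N: sigma_finite_measure N by fact
  interpret D: prob_space "distr M S \<xi>" by (rule prob_space_distr) simp
  interpret pair_sigma_finite "distr M S \<xi>" N ..
  have fibres: "{\<omega>\<in>space M. \<xi> \<omega> = x} \<in> events" if "x \<in> F" for x
    using measurable_sets[OF assms(1) singletons[OF that]]
    by (simp add: vimage_def Int_def conj_commute)
  have H': "H \<in> borel_measurable (distr M S \<xi> \<Otimes>\<^sub>M N)"
    using H by (simp add: measurable_def space_pair_measure sets_pair_measure)
  have "{x\<in>space S. x \<in> F} = (\<Union>x\<in>F. {x}) \<inter> space S" by auto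
  also have "\<dots> \<in> sets S"
    using assms(2) singletons by (intro sets.Int sets.finite_UN) auto
  finally have "AE x in distr M S \<xi>. x \<in> F"
    using assms(3) by (subst AE_distr_iff) auto
  then have "AE x in distr M S \<xi>. integrable N (\<lambda>y. H (x, y))"
    by eventually_elim (rule H_int)
  moreover have "integrable (distr M S \<xi>) (\<lambda>x. \<integral>y. norm (H (x, y)) \<partial>N)"
    using assms(2,3) fibres
    by (subst integrable_distr_eq)
      (auto intro: integrable_finite_valued N.borel_measurable_lebesgue_integral)
  ultimately show int: "integrable (distr M S \<xi> \<Otimes>\<^sub>M N) H"
    by (intro Fubini_integrable[OF H'])
  have "(\<integral>z. H z \<partial>(distr M S \<xi> \<Otimes>\<^sub>M N)) = (\<integral>\<omega>. (\<integral>y. H (\<xi> \<omega>, y) \<partial>N) \<partial>M)"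
    by (subst integral_fst'[symmetric, OF int])
      (auto intro!: integral_distr N.borel_measurable_lebesgue_integral)
  also have "\<dots> = (\<Sum>x\<in>F. prob {\<omega>\<in>space M. \<xi> \<omega> = x} * (\<integral>y. H (x, y) \<partial>N))"
    using assms(2,3) fibres by (rule integral_finite_valued)
  finally show "(\<integral>z. H z \<partial>(distr M S \<xi> \<Otimes>\<^sub>M N)) = \<dots>" .
qed

end

section \<open>Sums of independent \<open>\<plusminus>1\<close> variables\<close>

lemma sum_pm1_values:
  fixes v :: "'i \<Rightarrow> real"
  assumes "finite J" "\<And>j. j \<in> J \<Longrightarrow> v j \<in> {-1, 1}"
  shows "\<exists>k\<le>card J. (\<Sum>j\<in>J. v j) = 2 * real k - real (card J)"
  using assms
proof (induction J rule: finite_induct)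
  case (insert j J)
  then obtain k where "k \<le> card J" "(\<Sum>j\<in>J. v j) = 2 * real k - real (card J)" by auto
  moreover have "v j = -1 \<or> v j = 1" using insert by auto
  ultimately show ?case
    using insert by (elim disjE; intro exI[of _ k] exI[of _ "Suc k"]) auto
qed simp

lemma pmf_binomial_Suc_Suc:
  assumes "0 \<le> p" "p \<le> 1"
  shows "pmf (binomial_pmf (Suc n) p) (Suc k) =
    p * pmf (binomial_pmf n p) k + (1 - p) * pmf (binomial_pmf n p) (Suc k)"
proof (cases "Suc k \<le> n")
  case True
  then have "n - k = Suc (n - Suc k)" by simp
  then have "(1 - p) ^ (n - k) = (1 - p) * (1 - p) ^ (n - Suc k)"
    by (simp only: power_Suc)
  then show ?thesis
    by (simp only: pmf_binomial[OF assms] binomial_Suc_Suc diff_Suc_Suc of_nat_add)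
      (simp add: algebra_simps)
next
  case False
  then have "n choose Suc k = 0" by simp
  then show ?thesis by (simp add: pmf_binomial[OF assms] algebra_simps)
qed

context prob_space
begin

lemma prob_sum_insert_pm1:
  fixes V :: "'i \<Rightarrow> 'a \<Rightarrow> real"
  assumes "finite J" "j \<notin> J" and indep: "indep_vars (\<lambda>_. borel) V (insert j J)"
    and pm1: "\<And>\<omega>. \<omega> \<in> space M \<Longrightarrow> V j \<omega> \<in> {-1, 1}" and prob_1: "prob {\<omega>\<in>space M. V j \<omega> = 1} = p"
  shows "prob {\<omega>\<in>space M. (\<Sum>i\<in>insert j J. V i \<omega>) = t} =
    p * prob {\<omega>\<in>space M. (\<Sum>i\<in>J. V i \<omega>) = t - 1} + (1 - p) * prob {\<omega>\<in>space M. (\<Sum>i\<in>J. V i \<omega>) = t + 1}"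
proof -
  define S where "S \<omega> = (\<Sum>i\<in>J. V i \<omega>)" for \<omega>
  have [measurable]: "V i \<in> borel_measurable M" if "i \<in> insert j J" for i
    using indep that unfolding indep_vars_def by auto
  have [measurable]: "S \<in> borel_measurable M" unfolding S_def by measurable
  have "indep_var borel (V j) borel S"
    unfolding S_def using assms(1,2) indep by (intro indep_vars_sum) auto
  moreover have "prob {\<omega>\<in>space M. V j \<omega> = -1} = 1 - p"
  proof -
    have "{\<omega>\<in>space M. V j \<omega> = -1} = space M - {\<omega>\<in>space M. V j \<omega> = 1}"
      using pm1 by force
    then show ?thesis using prob_1 by (simp add: prob_compl)
  qed
  ultimately have joint: "prob {\<omega>\<in>space M. V j \<omega> = a \<and> S \<omega> = s} =
      (if a = 1 then p else 1 - p) * prob {\<omega>\<in>space M. S \<omega> = s}" if "a \<in> {-1, 1}" for a s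
    using prob_indep_random_variable[of borel "V j" S "{a}" "{s}"] prob_1 that by auto
  have "{\<omega>\<in>space M. (\<Sum>i\<in>insert j J. V i \<omega>) = t} =
      {\<omega>\<in>space M. V j \<omega> = 1 \<and> S \<omega> = t - 1} \<union> {\<omega>\<in>space M. V j \<omega> = -1 \<and> S \<omega> = t + 1}"
    using assms(1,2) pm1 unfolding S_def by (auto; force)
  moreover have "{\<omega>\<in>space M. V j \<omega> = a \<and> S \<omega> = s} \<in> events" for a s by measurable
  ultimately have "prob {\<omega>\<in>space M. (\<Sum>i\<in>insert j J. V i \<omega>) = t} =
      prob {\<omega>\<in>space M. V j \<omega> = 1 \<and> S \<omega> = t - 1} + prob {\<omega>\<in>space M. V j \<omega> = -1 \<and> S \<omega> = t + 1}"
    by (auto intro: finite_measure_Union)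
  also have "\<dots> = p * prob {\<omega>\<in>space M. S \<omega> = t - 1} + (1 - p) * prob {\<omega>\<in>space M. S \<omega> = t + 1}"
    by (simp add: joint)
  finally show ?thesis unfolding S_def .
qed

lemma prob_sum_pm1_eq:
  fixes V :: "'i \<Rightarrow> 'a \<Rightarrow> real"
  assumes "finite J" and "indep_vars (\<lambda>_. borel) V J"
    and "\<And>j \<omega>. j \<in> J \<Longrightarrow> \<omega> \<in> space M \<Longrightarrow> V j \<omega> \<in> {-1, 1}"
    and "\<And>j. j \<in> J \<Longrightarrow> prob {\<omega>\<in>space M. V j \<omega> = 1} = p"
    and p: "0 \<le> p" "p \<le> 1"
  shows "prob {\<omega>\<in>space M. (\<Sum>j\<in>J. V j \<omega>) = 2 * real k - real (card J)} =
    pmf (binomial_pmf (card J) p) k"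
  using assms(1-4)
proof (induction J arbitrary: k rule: finite_induct)
  case empty
  have "{\<omega>\<in>space M. (0::real) = 2 * real k} = (if k = 0 then space M else {})" by auto
  then show ?case using p by (simp add: prob_space)
next
  case (insert j J)
  define c where "c = card J"
  have IH: "prob {\<omega>\<in>space M. (\<Sum>i\<in>J. V i \<omega>) = 2 * real k' - real c} = pmf (binomial_pmf c p) k'"
    for k'
    using insert.IH[of k'] insert.prems indep_vars_subset[OF insert.prems(1)] unfolding c_def
    by auto
  have "prob {\<omega>\<in>space M. (\<Sum>i\<in>J. V i \<omega>) = - real c - 2} = 0"
  proof -
    have "(\<Sum>i\<in>J. V i \<omega>) \<noteq> - real c - 2" if "\<omega> \<in> space M" for \<omega>
      using sum_pm1_values[of J "\<lambda>i. V i \<omega>"] insert.hyps insert.prems(2) that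
      unfolding c_def by fastforce
    then have "{\<omega>\<in>space M. (\<Sum>i\<in>J. V i \<omega>) = - real c - 2} = {}" by auto
    then show ?thesis by (simp only: measure_empty)
  qed
  moreover have "prob {\<omega>\<in>space M. (\<Sum>i\<in>insert j J. V i \<omega>) = 2 * real k - real (Suc c)} =
      p * prob {\<omega>\<in>space M. (\<Sum>i\<in>J. V i \<omega>) = 2 * real k - real c - 2} +
      (1 - p) * prob {\<omega>\<in>space M. (\<Sum>i\<in>J. V i \<omega>) = 2 * real k - real c}"
    using insert.hyps insert.prems by (subst prob_sum_insert_pm1) (auto simp: algebra_simps)
  ultimately have "prob {\<omega>\<in>space M. (\<Sum>i\<in>insert j J. V i \<omega>) = 2 * real k - real (Suc c)} =
      pmf (binomial_pmf (Suc c) p) k"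
    using IH[of k] IH[of "k - 1"] pmf_binomial_Suc_Suc[OF p, of c "k - 1"] p
    by (cases k) (simp_all add: algebra_simps)
  then show ?case using insert.hyps unfolding c_def by simp
qed

lemma expectation_log_prob_sum_pm1:
  fixes V :: "'i \<Rightarrow> 'a \<Rightarrow> real"
  assumes "finite J" and "indep_vars (\<lambda>_. borel) V J"
    and vals: "\<And>j \<omega>. j \<in> J \<Longrightarrow> \<omega> \<in> space M \<Longrightarrow> V j \<omega> \<in> {-1, 1}"
    and "\<And>j. j \<in> J \<Longrightarrow> prob {\<omega>\<in>space M. V j \<omega> = 1} = p"
    and "0 \<le> p" "p \<le> 1"
  defines "P t \<equiv> prob {\<omega>\<in>space M. (\<Sum>j\<in>J. V j \<omega>) = t}"
  shows "integrable M (\<lambda>\<omega>. log 2 (P (\<Sum>j\<in>J. V j \<omega>)))"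
    and "(\<integral>\<omega>. log 2 (P (\<Sum>j\<in>J. V j \<omega>)) \<partial>M) = - binom_entropy (card J) p"
proof -
  define c where "c = card J"
  define Vals where "Vals = (\<lambda>k. 2 * real k - real c) ` {0..c}"
  have "V i \<in> borel_measurable M" if "i \<in> J" for i
    using assms(2) that unfolding indep_vars_def by auto
  then have "(\<lambda>\<omega>. \<Sum>i\<in>J. V i \<omega>) \<in> borel_measurable M" by measurable
  then have fibres: "{\<omega>\<in>space M. (\<Sum>j\<in>J. V j \<omega>) = t} \<in> events" for t by measurable
  have sum_values: "(\<Sum>j\<in>J. V j \<omega>) \<in> Vals" if "\<omega> \<in> space M" for \<omega>
    using sum_pm1_values[of J "\<lambda>j. V j \<omega>"] assms(1) vals that unfolding Vals_def c_def by auto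
  show "integrable M (\<lambda>\<omega>. log 2 (P (\<Sum>j\<in>J. V j \<omega>)))"
    by (rule integrable_finite_valued[where F=Vals and f="\<lambda>\<omega>. \<Sum>j\<in>J. V j \<omega>"])
      (use sum_values fibres in \<open>auto simp: Vals_def\<close>)
  have "(\<integral>\<omega>. log 2 (P (\<Sum>j\<in>J. V j \<omega>)) \<partial>M) = (\<Sum>t\<in>Vals. P t * log 2 (P t))"
    unfolding P_def
    by (rule integral_finite_valued[where F=Vals and f="\<lambda>\<omega>. \<Sum>j\<in>J. V j \<omega>"])
      (use sum_values fibres in \<open>auto simp: Vals_def\<close>)
  also have "\<dots> = (\<Sum>k\<in>{0..c}. P (2 * real k - real c) * log 2 (P (2 * real k - real c)))"
    unfolding Vals_def by (subst sum.reindex) (auto simp: inj_on_def)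
  also have "\<dots> = (\<Sum>k\<in>{0..c}. pmf (binomial_pmf c p) k * log 2 (pmf (binomial_pmf c p) k))"
    using prob_sum_pm1_eq[OF assms(1-6)] unfolding P_def c_def by simp
  finally show "(\<integral>\<omega>. log 2 (P (\<Sum>j\<in>J. V j \<omega>)) \<partial>M) = - binom_entropy (card J) p"
    unfolding binom_entropy_def c_def by simp
qed

end

section \<open>Independent blocks of random variables\<close>

lemma (in prob_space) prob_indep_blocks:
  fixes V :: "'i \<Rightarrow> 'a \<Rightarrow> real"
  assumes "indep_vars (\<lambda>_. borel) V I" and "\<And>j. j \<in> L \<Longrightarrow> Kb j \<subseteq> I"
    and "disjoint_family_on Kb L" and "finite L"
    and "\<And>j. j \<in> L \<Longrightarrow> Measurable.pred (PiM (Kb j) (\<lambda>_. borel)) (P j)"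
  shows "prob {\<omega>\<in>space M. \<forall>j\<in>L. P j (\<lambda>i\<in>Kb j. V i \<omega>)} =
    (\<Prod>j\<in>L. prob {\<omega>\<in>space M. P j (\<lambda>i\<in>Kb j. V i \<omega>)})"
proof (cases "L = {}")
  case False
  define C where "C j = {r \<in> space (PiM (Kb j) (\<lambda>_. borel)). P j r}" for j
  have "indep_vars (\<lambda>j. PiM (Kb j) (\<lambda>_. borel)) (\<lambda>j \<omega>. \<lambda>i\<in>Kb j. V i \<omega>) L"
    using assms(1-3) by (rule indep_vars_restrict)
  moreover have "C j \<in> sets (PiM (Kb j) (\<lambda>_. borel))" if "j \<in> L" for j
    unfolding C_def using assms(5)[OF that] by measurable
  ultimately have "prob (\<Inter>j\<in>L. (\<lambda>\<omega>. \<lambda>i\<in>Kb j. V i \<omega>) -` C j \<inter> space M) =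
      (\<Prod>j\<in>L. prob ((\<lambda>\<omega>. \<lambda>i\<in>Kb j. V i \<omega>) -` C j \<inter> space M))"
    using assms(4) False by (intro indep_varsD) auto
  moreover have "(\<lambda>\<omega>. \<lambda>i\<in>Kb j. V i \<omega>) -` C j \<inter> space M = {\<omega>\<in>space M. P j (\<lambda>i\<in>Kb j. V i \<omega>)}" for j
    unfolding C_def by (auto simp: space_PiM)
  moreover have "(\<Inter>j\<in>L. {\<omega>\<in>space M. P j (\<lambda>i\<in>Kb j. V i \<omega>)}) =
      {\<omega>\<in>space M. \<forall>j\<in>L. P j (\<lambda>i\<in>Kb j. V i \<omega>)}"
    using False by auto
  ultimately show ?thesis by (simp add: Int_def conj_commute)
qed (simp add: prob_space)

lemma singleton_in_sets_PiM:
  assumes "finite I" "x \<in> extensional I"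
  shows "{x} \<in> sets (PiM I (\<lambda>_. borel :: 'a::t1_space measure))"
proof -
  have "PiE I (\<lambda>i. {x i}) = {x}"
    using assms(2) by (auto simp: PiE_def extensional_def Pi_def fun_eq_iff) metis
  moreover have "PiE I (\<lambda>i. {x i}) \<in> sets (PiM I (\<lambda>_. borel))"
    using assms(1) by (intro sets_PiM_I_finite) (auto intro: borel_closed)
  ultimately show ?thesis by simp
qed

section \<open>Densities of a finite mixture\<close>

lemma set_integral_density_eq_measure:
  fixes g :: "'a \<Rightarrow> real"
  assumes [measurable]: "g \<in> borel_measurable \<mu>" and "\<And>y. 0 \<le> g y" and A: "A \<in> sets \<mu>"
  shows "(LINT y:A|\<mu>. g y) = measure (density \<mu> (\<lambda>y. ennreal (g y))) A"
proof -
  have "(\<integral>y. (indicator A y :: real) \<partial>density \<mu> (\<lambda>y. ennreal (g y))) =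
      (\<integral>y. g y *\<^sub>R indicator A y \<partial>\<mu>)"
    using assms by (intro Bochner_Integration.integral_density[of "indicator A" \<mu> g]) auto
  then show ?thesis
    using A by (simp add: set_lebesgue_integral_def mult.commute Int_absorb2 sets.sets_into_space)
qed

lemma integrable_density_finite_measure:
  fixes g :: "'a \<Rightarrow> real"
  assumes [measurable]: "g \<in> borel_measurable \<mu>" and "\<And>y. 0 \<le> g y"
    and "finite_measure (density \<mu> (\<lambda>y. ennreal (g y)))"
  shows "integrable \<mu> g"
proof -
  interpret finite_measure "density \<mu> (\<lambda>y. ennreal (g y))" by fact
  have "integrable (density \<mu> (\<lambda>y. ennreal (g y))) (\<lambda>_. 1::real)" by simp
  then show ?thesis using assms(2) by (subst (asm) Bochner_Integration.integrable_density) auto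
qed

lemma finite_mixture_RN_deriv:
  fixes \<nu> :: "'u \<Rightarrow> 'a measure" and w :: "'u \<Rightarrow> real"
  assumes "prob_space \<mu>" "finite U"
    and \<nu>: "\<And>u. u \<in> U \<Longrightarrow> prob_space (\<nu> u)" "\<And>u. u \<in> U \<Longrightarrow> sets (\<nu> u) = sets \<mu>"
    and w: "\<And>u. u \<in> U \<Longrightarrow> 0 < w u"
    and mixture: "\<And>B. B \<in> sets \<mu> \<Longrightarrow> measure \<mu> B = (\<Sum>u\<in>U. w u * measure (\<nu> u) B)"
  defines "g u y \<equiv> enn2real (RN_deriv \<mu> (\<nu> u) y)"
  shows "\<And>u. u \<in> U \<Longrightarrow> density \<mu> (\<lambda>y. ennreal (g u y)) = \<nu> u"
    and "AE y in \<mu>. (\<Sum>u\<in>U. w u * g u y) = 1"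
proof -
  interpret \<mu>: prob_space \<mu> by fact
  have [measurable]: "g u \<in> borel_measurable \<mu>" for u unfolding g_def by measurable
  have ac: "absolutely_continuous \<mu> (\<nu> u)" if u: "u \<in> U" for u
    unfolding absolutely_continuous_def
  proof
    fix B assume B: "B \<in> null_sets \<mu>"
    then have "(\<Sum>u\<in>U. w u * measure (\<nu> u) B) = 0"
      using mixture[of B] by (simp add: null_sets_def \<mu>.emeasure_eq_measure)
    then have "w u * measure (\<nu> u) B = 0"
      using assms(2) u less_imp_le[OF w] by (subst (asm) sum_nonneg_eq_0_iff) auto
    then have "emeasure (\<nu> u) B = 0"
      using w[OF u] \<nu>(1)[OF u] by (simp add: finite_measure.emeasure_eq_measure prob_space_def)
    then show "B \<in> null_sets (\<nu> u)" using B \<nu>(2)[OF u] by (simp add: null_sets_def)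
  qed
  show density: "density \<mu> (\<lambda>y. ennreal (g u y)) = \<nu> u" if u: "u \<in> U" for u
  proof -
    have "AE y in \<mu>. RN_deriv \<mu> (\<nu> u) y \<noteq> \<infinity>"
      using u \<nu>[OF u] ac[OF u]
      by (intro \<mu>.RN_deriv_finite prob_space_imp_sigma_finite) auto
    then have "density \<mu> (\<lambda>y. ennreal (g u y)) = density \<mu> (RN_deriv \<mu> (\<nu> u))"
      unfolding g_def by (intro density_cong) (auto simp: less_top)
    also have "\<dots> = \<nu> u"
      using u \<nu>[OF u] ac[OF u] by (intro \<mu>.density_RN_deriv) auto
    finally show ?thesis .
  qed
  have g_nonneg: "0 \<le> g u y" for u y unfolding g_def by simp
  have g_int: "integrable \<mu> (g u)" if u: "u \<in> U" for u
    using g_nonneg prob_space.axioms(1)[OF \<nu>(1)[OF u]]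
    by (intro integrable_density_finite_measure) (auto simp: density[OF u])
  have g_set_integral: "(LINT y:A|\<mu>. g u y) = measure (\<nu> u) A" if "u \<in> U" "A \<in> sets \<mu>" for u A
    using that g_nonneg by (simp add: set_integral_density_eq_measure density)
  show "AE y in \<mu>. (\<Sum>u\<in>U. w u * g u y) = 1"
  proof (rule density_unique_real)
    show "integrable \<mu> (\<lambda>y. \<Sum>u\<in>U. w u * g u y)" using g_int by auto
    fix A assume A: "A \<in> sets \<mu>"
    have "(LINT y:A|\<mu>. (\<Sum>u\<in>U. w u * g u y)) = (\<integral>y. (\<Sum>u\<in>U. w u * (g u y * indicator A y)) \<partial>\<mu>)"
      unfolding set_lebesgue_integral_def by (simp add: sum_distrib_left sum_distrib_right mult_ac)
    also have "\<dots> = (\<Sum>u\<in>U. w u * (LINT y:A|\<mu>. g u y))"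
      using integrable_real_mult_indicator[OF A g_int] unfolding set_lebesgue_integral_def
      by (subst Bochner_Integration.integral_sum) (auto simp: mult_ac)
    also have "\<dots> = measure \<mu> A" using mixture[OF A] g_set_integral[OF _ A] by simp
    finally show "(LINT y:A|\<mu>. (\<Sum>u\<in>U. w u * g u y)) = (LINT y:A|\<mu>. 1)"
      using A by (simp add: set_lebesgue_integral_def)
  qed simp
qed

section \<open>Data processing through independent noise\<close>

locale independent_noise_channel = prob_space M
  for M :: "'a measure"
    and S :: "'x measure" and X :: "'a \<Rightarrow> 'x" and Fx :: "'x set"
    and U :: "'a \<Rightarrow> 'u" and Fu :: "'u set"
    and T :: "'t measure" and Z :: "'a \<Rightarrow> 't" and shift :: "'u \<Rightarrow> 't \<Rightarrow> 't" +
  assumes X_measurable[measurable]: "X \<in> measurable M S"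
    and finite_Fx: "finite Fx" and X_in_Fx: "\<And>\<omega>. \<omega> \<in> space M \<Longrightarrow> X \<omega> \<in> Fx"
    and singleton_in_S: "\<And>x. x \<in> Fx \<Longrightarrow> {x} \<in> sets S"
    and finite_Fu: "finite Fu" and U_in_Fu: "\<And>\<omega>. \<omega> \<in> space M \<Longrightarrow> U \<omega> \<in> Fu"
    and U_fibre: "\<And>u. u \<in> Fu \<Longrightarrow> {\<omega>\<in>space M. U \<omega> = u} \<in> events"
    and Z_measurable[measurable]: "Z \<in> measurable M T"
    and shift_measurable: "\<And>u. u \<in> Fu \<Longrightarrow> shift u \<in> measurable T T"
    and output_measurable[measurable]: "(\<lambda>\<omega>. shift (U \<omega>) (Z \<omega>)) \<in> measurable M T"
    and noise_indep: "\<And>x u B. x \<in> Fx \<Longrightarrow> u \<in> Fu \<Longrightarrow> B \<in> sets T \<Longrightarrow>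
      prob {\<omega>\<in>space M. X \<omega> = x \<and> U \<omega> = u \<and> Z \<omega> \<in> B} =
      prob {\<omega>\<in>space M. X \<omega> = x \<and> U \<omega> = u} * prob {\<omega>\<in>space M. Z \<omega> \<in> B}"
begin

definition "pX x = prob {\<omega>\<in>space M. X \<omega> = x}"
definition "pU u = prob {\<omega>\<in>space M. U \<omega> = u}"
definition "pXU x u = prob {\<omega>\<in>space M. X \<omega> = x \<and> U \<omega> = u}"
definition "support_U = {u\<in>Fu. 0 < pU u}"

definition "noise_law u = distr M T (\<lambda>\<omega>. shift u (Z \<omega>))"
definition "output_law = distr M T (\<lambda>\<omega>. shift (U \<omega>) (Z \<omega>))"
definition "product_law = distr M S X \<Otimes>\<^sub>M output_law"
definition "noise_density u y = enn2real (RN_deriv output_law (noise_law u) y)"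

text \<open>\<open>P(U = u | X = x)\<close>, written as a simple function of \<open>x\<close> so that it is measurable.\<close>
definition cond_prob :: "'x \<Rightarrow> 'u \<Rightarrow> real" where
  "cond_prob x u = (\<Sum>a\<in>Fx. indicator {a} x * (pXU a u / pX a))"

text \<open>Given \<open>X = x\<close> and \<open>U = u\<close> the output has law \<open>noise_law u\<close>, so the joint law of \<open>X\<close> and the
  output has this density with respect to \<open>product_law\<close>.\<close>
definition "joint_density z = (\<Sum>u\<in>support_U. cond_prob (fst z) u * noise_density u (snd z))"

definition "signal_information b = (\<Sum>x\<in>Fx. \<Sum>u\<in>Fu. pXU x u * log b (pXU x u / (pX x * pU u)))"

definition "log_sum_bound b z = (\<Sum>u\<in>support_U.
  cond_prob (fst z) u * noise_density u (snd z) * log b (cond_prob (fst z) u / pU u))"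

lemma X_fibre: "x \<in> Fx \<Longrightarrow> {\<omega>\<in>space M. X \<omega> = x} \<in> events"
  using measurable_sets[OF X_measurable singleton_in_S]
  by (simp add: vimage_def Int_def conj_commute)

lemma XU_fibre: "x \<in> Fx \<Longrightarrow> u \<in> Fu \<Longrightarrow> {\<omega>\<in>space M. X \<omega> = x \<and> U \<omega> = u} \<in> events"
proof -
  have "{\<omega>\<in>space M. X \<omega> = x \<and> U \<omega> = u} = {\<omega>\<in>space M. X \<omega> = x} \<inter> {\<omega>\<in>space M. U \<omega> = u}"
    by auto
  then show "x \<in> Fx \<Longrightarrow> u \<in> Fu \<Longrightarrow> ?thesis" using X_fibre U_fibre by auto
qed

lemma sum_pXU: "u \<in> Fu \<Longrightarrow> (\<Sum>x\<in>Fx. pXU x u) = pU u"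
  unfolding pU_def pXU_def using finite_Fx X_in_Fx XU_fibre
  by (subst prob_eq_sum_fibres[of Fx X]) (auto simp: conj_commute)

lemma pXU_le_pX: "x \<in> Fx \<Longrightarrow> pXU x u \<le> pX x"
  unfolding pXU_def pX_def using X_fibre by (intro finite_measure_mono) auto

lemma pXU_le_pU: "u \<in> Fu \<Longrightarrow> pXU x u \<le> pU u"
  unfolding pXU_def pU_def using U_fibre by (intro finite_measure_mono) auto

lemma pXU_eq_0: "u \<in> Fu - support_U \<Longrightarrow> pXU x u = 0"
  using pXU_le_pU[of u x] unfolding support_U_def pXU_def by (auto intro: antisym)

lemma pX_mult_cond_prob: "x \<in> Fx \<Longrightarrow> pX x * cond_prob x u = pXU x u"
proof -
  assume x: "x \<in> Fx"
  have "cond_prob x u = (\<Sum>a\<in>Fx. if a = x then pXU a u / pX a else 0)"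
    unfolding cond_prob_def by (intro sum.cong) (auto simp: indicator_def)
  also have "\<dots> = pXU x u / pX x" using finite_Fx x by simp
  finally have "cond_prob x u = pXU x u / pX x" .
  moreover have "pX x = 0 \<Longrightarrow> pXU x u = 0"
    using pXU_le_pX[OF x, of u] unfolding pXU_def by (auto intro: antisym)
  ultimately show ?thesis by auto
qed

lemma cond_prob_nonneg: "0 \<le> cond_prob x u"
  unfolding cond_prob_def pXU_def pX_def by (intro sum_nonneg) auto

lemma measurable_cond_prob[measurable]: "(\<lambda>x. cond_prob x u) \<in> borel_measurable S"
  unfolding cond_prob_def using singleton_in_S by measurable

lemma measure_noise_law:
  assumes "u \<in> Fu" "B \<in> sets T"
  shows "measure (noise_law u) B = prob {\<omega>\<in>space M. Z \<omega> \<in> shift u -` B \<inter> space T}"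
proof -
  have "(\<lambda>\<omega>. shift u (Z \<omega>)) \<in> measurable M T"
    using shift_measurable[OF assms(1)] by measurable
  then show ?thesis
    unfolding noise_law_def using assms(2) measurable_space[OF Z_measurable]
    by (subst measure_distr) (auto intro!: arg_cong[where f=prob])
qed

lemma prob_output_fibre:
  assumes E: "E \<in> sets (S \<Otimes>\<^sub>M T)" and x: "x \<in> Fx" and u: "u \<in> Fu"
  shows "prob {\<omega>\<in>space M. (X \<omega>, shift (U \<omega>) (Z \<omega>)) \<in> E \<and> X \<omega> = x \<and> U \<omega> = u} =
    pXU x u * measure (noise_law u) (Pair x -` E)"
proof -
  define B where "B = shift u -` Pair x -` E \<inter> space T"
  have B: "B \<in> sets T"
    unfolding B_def using measurable_sets[OF shift_measurable[OF u] sets_Pair1[OF E]] .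
  have "{\<omega>\<in>space M. (X \<omega>, shift (U \<omega>) (Z \<omega>)) \<in> E \<and> X \<omega> = x \<and> U \<omega> = u} =
      {\<omega>\<in>space M. X \<omega> = x \<and> U \<omega> = u \<and> Z \<omega> \<in> B}"
    unfolding B_def using measurable_space[OF Z_measurable] by auto
  moreover have "measure (noise_law u) (Pair x -` E) = prob {\<omega>\<in>space M. Z \<omega> \<in> B}"
    unfolding B_def by (rule measure_noise_law[OF u sets_Pair1[OF E]])
  ultimately show ?thesis using noise_indep[OF x u B] unfolding pXU_def by simp
qed

lemma prob_joint_output:
  assumes E: "E \<in> sets (S \<Otimes>\<^sub>M T)"
  shows "prob {\<omega>\<in>space M. (X \<omega>, shift (U \<omega>) (Z \<omega>)) \<in> E} =
    (\<Sum>x\<in>Fx. \<Sum>u\<in>support_U. pXU x u * measure (noise_law u) (Pair x -` E))"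
proof -
  have "{\<omega>\<in>space M. (X \<omega>, shift (U \<omega>) (Z \<omega>)) \<in> E \<and> (X \<omega>, U \<omega>) = xu} \<in> events"
    if "xu \<in> Fx \<times> Fu" for xu
  proof -
    have "(\<lambda>\<omega>. (X \<omega>, shift (U \<omega>) (Z \<omega>))) -` E \<inter> space M \<in> events"
      using E by measurable
    moreover have "{\<omega>\<in>space M. (X \<omega>, shift (U \<omega>) (Z \<omega>)) \<in> E \<and> (X \<omega>, U \<omega>) = xu} =
        ((\<lambda>\<omega>. (X \<omega>, shift (U \<omega>) (Z \<omega>))) -` E \<inter> space M) \<inter> {\<omega>\<in>space M. X \<omega> = fst xu \<and> U \<omega> = snd xu}"
      by (cases xu) auto
    ultimately show ?thesis using that XU_fibre[of "fst xu" "snd xu"] by auto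
  qed
  then have "prob {\<omega>\<in>space M. (X \<omega>, shift (U \<omega>) (Z \<omega>)) \<in> E} =
      (\<Sum>xu\<in>Fx \<times> Fu. prob {\<omega>\<in>space M. (X \<omega>, shift (U \<omega>) (Z \<omega>)) \<in> E \<and> (X \<omega>, U \<omega>) = xu})"
    using finite_Fx finite_Fu X_in_Fx U_in_Fu by (intro prob_eq_sum_fibres) auto
  also have "\<dots> = (\<Sum>x\<in>Fx. \<Sum>u\<in>Fu. pXU x u * measure (noise_law u) (Pair x -` E))"
    unfolding sum.cartesian_product by (intro sum.cong refl) (auto simp: prob_output_fibre[OF E])
  also have "\<dots> = (\<Sum>x\<in>Fx. \<Sum>u\<in>support_U. pXU x u * measure (noise_law u) (Pair x -` E))"
    using finite_Fu pXU_eq_0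
    by (intro sum.cong refl sum.mono_neutral_right) (auto simp: support_U_def)
  finally show ?thesis .
qed

lemma sets_output_law[simp]: "sets output_law = sets T"
  unfolding output_law_def by simp

lemma sets_product_law: "sets product_law = sets (S \<Otimes>\<^sub>M T)"
  unfolding product_law_def by (intro sets_pair_measure_cong) simp_all

lemma sets_pair_output_law: "sets (S \<Otimes>\<^sub>M output_law) = sets (S \<Otimes>\<^sub>M T)"
  by (intro sets_pair_measure_cong) simp_all

lemma prob_space_output_law: "prob_space output_law"
  unfolding output_law_def by (rule prob_space_distr) simp

lemma prob_space_product_law: "prob_space product_law"
  unfolding product_law_def
  by (intro prob_space_pair prob_space_output_law prob_space_distr X_measurable)

lemma prob_space_noise_law: "u \<in> Fu \<Longrightarrow> prob_space (noise_law u)"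
  using shift_measurable unfolding noise_law_def by (auto intro!: prob_space_distr)

lemma measure_output_law:
  assumes B: "B \<in> sets T"
  shows "measure output_law B = (\<Sum>u\<in>support_U. pU u * measure (noise_law u) B)"
proof -
  have "measure output_law B = prob {\<omega>\<in>space M. (X \<omega>, shift (U \<omega>) (Z \<omega>)) \<in> space S \<times> B}"
    unfolding output_law_def using B measurable_space[OF X_measurable]
    by (subst measure_distr) (auto intro!: arg_cong[where f=prob])
  also have "\<dots> = (\<Sum>x\<in>Fx. \<Sum>u\<in>support_U. pXU x u * measure (noise_law u) B)"
  proof -
    have "Pair x -` (space S \<times> B) = B" if "x \<in> Fx" for x
      using sets.sets_into_space[OF singleton_in_S[OF that]] by auto
    then show ?thesis using prob_joint_output[OF pair_measureI[OF sets.top B]] by simp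
  qed
  also have "\<dots> = (\<Sum>u\<in>support_U. pU u * measure (noise_law u) B)"
    by (subst sum.swap) (simp add: sum_distrib_right[symmetric] sum_pXU support_U_def)
  finally show ?thesis .
qed

lemma
  shows density_noise_density:
      "u \<in> support_U \<Longrightarrow> density output_law (\<lambda>y. ennreal (noise_density u y)) = noise_law u"
    and sum_noise_density: "AE y in output_law. (\<Sum>u\<in>support_U. pU u * noise_density u y) = 1"
proof -
  have fin: "finite support_U" using finite_Fu unfolding support_U_def by simp
  have prob: "prob_space (noise_law u)" if "u \<in> support_U" for u
    using that prob_space_noise_law unfolding support_U_def by simp
  have sets: "sets (noise_law u) = sets output_law" for u
    unfolding noise_law_def by simp
  have pos: "0 < pU u" if "u \<in> support_U" for u
    using that unfolding support_U_def by simp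
  have mix: "measure output_law B = (\<Sum>u\<in>support_U. pU u * measure (noise_law u) B)"
    if "B \<in> sets output_law" for B
    using that by (intro measure_output_law) simp
  note mixture = finite_mixture_RN_deriv[OF prob_space_output_law fin prob sets pos mix]
  show "u \<in> support_U \<Longrightarrow> density output_law (\<lambda>y. ennreal (noise_density u y)) = noise_law u"
    unfolding noise_density_def by (rule mixture(1))
  show "AE y in output_law. (\<Sum>u\<in>support_U. pU u * noise_density u y) = 1"
    unfolding noise_density_def by (rule mixture(2))
qed

lemma measurable_noise_density[measurable]: "noise_density u \<in> borel_measurable T"
  using borel_measurable_RN_deriv[of output_law "noise_law u"]
  unfolding noise_density_def by (simp cong: measurable_cong_sets)

lemma noise_density_nonneg: "0 \<le> noise_density u y"
  unfolding noise_density_def by simp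

lemma integrable_noise_density: "u \<in> support_U \<Longrightarrow> integrable output_law (noise_density u)"
  using prob_space.axioms(1)[OF prob_space_noise_law] density_noise_density noise_density_nonneg
  by (intro integrable_density_finite_measure) (auto simp: support_U_def cong: measurable_cong_sets)

lemma set_integral_noise_density:
  "u \<in> support_U \<Longrightarrow> B \<in> sets T \<Longrightarrow> (LINT y:B|output_law. noise_density u y) = measure (noise_law u) B"
  using noise_density_nonneg
  by (simp add: set_integral_density_eq_measure density_noise_density cong: measurable_cong_sets)

lemma integral_noise_density_combination:
  assumes B: "B \<in> sets T"
  shows "integrable output_law (\<lambda>y. \<Sum>u\<in>support_U. c u * noise_density u y)"
    and "(\<integral>y. (\<Sum>u\<in>support_U. c u * noise_density u y) * indicator B y \<partial>output_law) =
      (\<Sum>u\<in>support_U. c u * measure (noise_law u) B)"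
proof -
  show "integrable output_law (\<lambda>y. \<Sum>u\<in>support_U. c u * noise_density u y)"
    using integrable_noise_density by auto
  have "(\<lambda>y. (\<Sum>u\<in>support_U. c u * noise_density u y) * indicator B y) =
      (\<lambda>y. \<Sum>u\<in>support_U. c u * (indicator B y * noise_density u y))"
    unfolding sum_distrib_right by (simp add: mult_ac)
  moreover have "integrable output_law (\<lambda>y. indicator B y * noise_density u y)"
    if "u \<in> support_U" for u
    using integrable_real_mult_indicator[OF _ integrable_noise_density[OF that]] B
    by (simp add: mult_ac)
  ultimately have "(\<integral>y. (\<Sum>u\<in>support_U. c u * noise_density u y) * indicator B y \<partial>output_law) =
      (\<Sum>u\<in>support_U. c u * (LINT y:B|output_law. noise_density u y))"
    by (simp add: Bochner_Integration.integral_sum set_lebesgue_integral_def)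
  also have "\<dots> = (\<Sum>u\<in>support_U. c u * measure (noise_law u) B)"
    using B by (simp add: set_integral_noise_density)
  finally show "(\<integral>y. (\<Sum>u\<in>support_U. c u * noise_density u y) * indicator B y \<partial>output_law) = \<dots>" .
qed

lemma measurable_joint_density[measurable]: "joint_density \<in> borel_measurable (S \<Otimes>\<^sub>M T)"
  unfolding joint_density_def by measurable

lemma joint_density_nonneg: "0 \<le> joint_density z"
  unfolding joint_density_def
  by (intro sum_nonneg mult_nonneg_nonneg cond_prob_nonneg noise_density_nonneg)

lemma measurable_joint_density_product_law[measurable]:
  "joint_density \<in> borel_measurable product_law"
  by (simp only: measurable_cong_sets[OF sets_product_law refl]) measurable

lemma
  assumes E: "E \<in> sets (S \<Otimes>\<^sub>M T)"
  shows integrable_joint_density_indicator: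
      "integrable product_law (\<lambda>z. joint_density z * indicator E z)"
    and integral_joint_density_indicator: "(\<integral>z. joint_density z * indicator E z \<partial>product_law) =
      prob {\<omega>\<in>space M. (X \<omega>, shift (U \<omega>) (Z \<omega>)) \<in> E}"
proof -
  define H where "H z = joint_density z * indicator E z" for z
  have "H \<in> borel_measurable (S \<Otimes>\<^sub>M T)" unfolding H_def using E by measurable
  then have H_measurable: "H \<in> borel_measurable (S \<Otimes>\<^sub>M output_law)"
    by (simp only: measurable_cong_sets[OF sets_pair_output_law refl])
  have H_section:
    "H (x, y) = (\<Sum>u\<in>support_U. cond_prob x u * noise_density u y) * indicator (Pair x -` E) y"
    for x y unfolding H_def joint_density_def by (simp add: indicator_def)
  note section_integrals =
    integral_noise_density_combination[OF sets_Pair1[OF E], of "cond_prob x" for x]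
  have "integrable output_law (\<lambda>y. H (x, y))" for x
    unfolding H_section using sets_Pair1[OF E] section_integrals(1)
    by (intro integrable_real_mult_indicator) auto
  note H = integral_pair_distr_finite_valued[OF X_measurable finite_Fx X_in_Fx singleton_in_S
      prob_space_imp_sigma_finite[OF prob_space_output_law] H_measurable this]
  show "integrable product_law (\<lambda>z. joint_density z * indicator E z)"
    using H(1) unfolding product_law_def H_def .
  have "(\<integral>z. joint_density z * indicator E z \<partial>product_law) =
      (\<Sum>x\<in>Fx. pX x * (\<integral>y. H (x, y) \<partial>output_law))"
    using H(2) unfolding product_law_def pX_def H_def .
  also have "\<dots> = (\<Sum>x\<in>Fx. \<Sum>u\<in>support_U. pXU x u * measure (noise_law u) (Pair x -` E))"
    unfolding H_section section_integrals(2)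
    by (intro sum.cong refl) (simp add: sum_distrib_left mult.assoc[symmetric] pX_mult_cond_prob)
  also have "\<dots> = prob {\<omega>\<in>space M. (X \<omega>, shift (U \<omega>) (Z \<omega>)) \<in> E}"
    by (rule prob_joint_output[OF E, symmetric])
  finally show "(\<integral>z. joint_density z * indicator E z \<partial>product_law) = \<dots>" .
qed

lemma density_joint_density:
  "density product_law (\<lambda>z. ennreal (joint_density z)) =
    distr M (S \<Otimes>\<^sub>M T) (\<lambda>\<omega>. (X \<omega>, shift (U \<omega>) (Z \<omega>)))"
proof (rule measure_eqI)
  fix E assume "E \<in> sets (density product_law (\<lambda>z. ennreal (joint_density z)))"
  then have E: "E \<in> sets (S \<Otimes>\<^sub>M T)" by (simp add: sets_product_law)
  have "emeasure (density product_law (\<lambda>z. ennreal (joint_density z))) E =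
      (\<integral>\<^sup>+z. ennreal (joint_density z * indicator E z) \<partial>product_law)"
    using E
    by (subst emeasure_density) (auto simp: sets_product_law indicator_mult_ennreal mult.commute)
  also have "\<dots> = ennreal (\<integral>z. joint_density z * indicator E z \<partial>product_law)"
    using integrable_joint_density_indicator[OF E]
    by (intro nn_integral_eq_integral) (auto simp: joint_density_nonneg)
  also have "\<dots> = emeasure (distr M (S \<Otimes>\<^sub>M T) (\<lambda>\<omega>. (X \<omega>, shift (U \<omega>) (Z \<omega>)))) E"
    using E unfolding integral_joint_density_indicator[OF E]
    by (subst emeasure_distr) (auto simp: emeasure_eq_measure intro!: arg_cong[where f=prob])
  finally show "emeasure (density product_law (\<lambda>z. ennreal (joint_density z))) E = \<dots>" .
qed (simp add: sets_product_law)

lemma mutual_information_eq_integral: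
  assumes "1 < b"
  shows "mutual_information b S T X (\<lambda>\<omega>. shift (U \<omega>) (Z \<omega>)) =
    (\<integral>z. joint_density z * log b (joint_density z) \<partial>product_law)"
proof -
  interpret P: prob_space product_law by (rule prob_space_product_law)
  have "KL_divergence b product_law (density product_law (\<lambda>z. ennreal (joint_density z))) =
      (\<integral>z. joint_density z * log b (joint_density z) \<partial>product_law)"
    using assms by (intro P.KL_density) (auto simp: joint_density_nonneg)
  then have "KL_divergence b product_law (distr M (S \<Otimes>\<^sub>M T) (\<lambda>\<omega>. (X \<omega>, shift (U \<omega>) (Z \<omega>)))) =
      (\<integral>z. joint_density z * log b (joint_density z) \<partial>product_law)"
    unfolding density_joint_density .
  then show ?thesis
    unfolding mutual_information_def product_law_def output_law_def .
qed

lemma joint_density_log_le: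
  assumes "1 < b"
  shows "AE z in product_law. joint_density z * log b (joint_density z) \<le> log_sum_bound b z"
proof -
  interpret D: prob_space "distr M S X" by (rule prob_space_distr) simp
  interpret O: prob_space output_law by (rule prob_space_output_law)
  interpret pair_prob_space "distr M S X" output_law ..
  have sets: "sets (distr M S X \<Otimes>\<^sub>M output_law) = sets (S \<Otimes>\<^sub>M T)"
    using sets_product_law unfolding product_law_def .
  have "{z \<in> space (S \<Otimes>\<^sub>M T). (\<Sum>u\<in>support_U. pU u * noise_density u (snd z)) = 1} \<in> sets (S \<Otimes>\<^sub>M T)"
    by measurable
  then have "AE z in product_law. (\<Sum>u\<in>support_U. pU u * noise_density u (snd z)) = 1"
    unfolding product_law_def using sum_noise_density
    by (intro AE_pair_measure) (auto simp: sets sets_eq_imp_space_eq[OF sets])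
  then show ?thesis
  proof eventually_elim
    case (elim z)
    have "finite support_U" using finite_Fu by (simp add: support_U_def)
    then show ?case unfolding joint_density_def log_sum_bound_def
      using elim assms cond_prob_nonneg noise_density_nonneg
      by (intro log_sum_inequality) (auto simp: support_U_def mult_ac)
  qed
qed

lemma pX_mult_cond_prob_log:
  assumes "x \<in> Fx"
  shows "pX x * (cond_prob x u * log b (cond_prob x u / pU u)) =
    pXU x u * log b (pXU x u / (pX x * pU u))"
proof (cases "pX x = 0")
  case True
  then show ?thesis using pX_mult_cond_prob[OF assms, of u] by simp
next
  case False
  have "pXU x u / (pX x * pU u) = (pX x * cond_prob x u) / (pX x * pU u)"
    using pX_mult_cond_prob[OF assms, of u] by simp
  also have "\<dots> = cond_prob x u / pU u" using False by simp
  finally show ?thesis using pX_mult_cond_prob[OF assms, of u] by (simp add: mult.assoc[symmetric])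
qed

lemma log_sum_bound_section:
  "log_sum_bound b (x, y) =
    (\<Sum>u\<in>support_U. (cond_prob x u * log b (cond_prob x u / pU u)) * noise_density u y)"
  unfolding log_sum_bound_def by (simp add: mult_ac)

lemma integral_log_sum_bound_section:
  "(\<integral>y. log_sum_bound b (x, y) \<partial>output_law) =
    (\<Sum>u\<in>support_U. cond_prob x u * log b (cond_prob x u / pU u))"
proof -
  have "(\<integral>y. log_sum_bound b (x, y) \<partial>output_law) =
      (\<integral>y. log_sum_bound b (x, y) * indicator (space T) y \<partial>output_law)"
    by (intro Bochner_Integration.integral_cong)
      (auto simp: sets_eq_imp_space_eq[OF sets_output_law])
  also have "\<dots> = (\<Sum>u\<in>support_U.
      cond_prob x u * log b (cond_prob x u / pU u) * measure (noise_law u) (space T))"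
    unfolding log_sum_bound_section by (rule integral_noise_density_combination(2)[OF sets.top])
  also have "\<dots> = (\<Sum>u\<in>support_U. cond_prob x u * log b (cond_prob x u / pU u))"
  proof (intro sum.cong refl)
    fix u assume "u \<in> support_U"
    then interpret N: prob_space "noise_law u"
      by (intro prob_space_noise_law) (simp add: support_U_def)
    have "space (noise_law u) = space T" unfolding noise_law_def by simp
    then show "cond_prob x u * log b (cond_prob x u / pU u) * measure (noise_law u) (space T) =
        cond_prob x u * log b (cond_prob x u / pU u)"
      using N.prob_space by simp
  qed
  finally show ?thesis .
qed

lemma
  shows integrable_log_sum_bound: "integrable product_law (log_sum_bound b)"
    and integral_log_sum_bound:
      "integral\<^sup>L product_law (log_sum_bound b) = signal_information b"
proof -
  have "log_sum_bound b \<in> borel_measurable (S \<Otimes>\<^sub>M T)" unfolding log_sum_bound_def by measurable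
  then have bound_measurable: "log_sum_bound b \<in> borel_measurable (S \<Otimes>\<^sub>M output_law)"
    by (simp only: measurable_cong_sets[OF sets_pair_output_law refl])
  have sections: "integrable output_law (\<lambda>y. log_sum_bound b (x, y))" for x
    unfolding log_sum_bound_section by (rule integral_noise_density_combination(1)[OF sets.top])
  note bound = integral_pair_distr_finite_valued[OF X_measurable finite_Fx X_in_Fx singleton_in_S
      prob_space_imp_sigma_finite[OF prob_space_output_law] bound_measurable sections]
  show "integrable product_law (log_sum_bound b)" unfolding product_law_def by (rule bound(1))
  have "integral\<^sup>L product_law (log_sum_bound b) =
      (\<Sum>x\<in>Fx. pX x * (\<Sum>u\<in>support_U. cond_prob x u * log b (cond_prob x u / pU u)))"
    using bound(2) unfolding product_law_def pX_def integral_log_sum_bound_section .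
  also have "\<dots> = (\<Sum>x\<in>Fx. \<Sum>u\<in>support_U. pXU x u * log b (pXU x u / (pX x * pU u)))"
    by (intro sum.cong refl) (simp add: sum_distrib_left pX_mult_cond_prob_log)
  also have "\<dots> = signal_information b"
    unfolding signal_information_def using finite_Fu pXU_eq_0
    by (intro sum.cong refl sum.mono_neutral_left) (auto simp: support_U_def)
  finally show "integral\<^sup>L product_law (log_sum_bound b) = signal_information b" .
qed

theorem mutual_information_le:
  assumes b: "1 < b"
  shows "mutual_information b S T X (\<lambda>\<omega>. shift (U \<omega>) (Z \<omega>)) \<le> signal_information b"
proof -
  interpret P: prob_space product_law by (rule prob_space_product_law)
  define F where "F z = joint_density z * log b (joint_density z)" for z
  note R = integrable_log_sum_bound[of b]
  have F_le: "AE z in product_law. F z \<le> log_sum_bound b z"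
    unfolding F_def by (rule joint_density_log_le[OF b])
  \<comment> \<open>A non-integrable Bochner integral is \<open>0\<close>, so integrability of \<open>F\<close> is needed for the bound;
    it holds because \<open>F\<close> lies between \<open>- 1 / ln b\<close> and the integrable \<open>log_sum_bound b\<close>.\<close>
  have "integrable product_law (\<lambda>z. \<bar>log_sum_bound b z\<bar> + 1 / ln b)"
    using Bochner_Integration.integrable_add[OF integrable_abs[OF R] P.integrable_const] .
  moreover have "F \<in> borel_measurable product_law" unfolding F_def by measurable
  moreover have "AE z in product_law. norm (F z) \<le> norm (\<bar>log_sum_bound b z\<bar> + 1 / ln b)"
    using F_le
  proof eventually_elim
    case (elim z)
    have "- (1 / ln b) \<le> F z"
      using mult_log_ge_neg_inverse_ln[OF b joint_density_nonneg] unfolding F_def by simp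
    moreover have "0 < 1 / ln b" using b by simp
    ultimately have "\<bar>F z\<bar> \<le> \<bar>log_sum_bound b z\<bar> + 1 / ln b"
      using elim abs_ge_self[of "log_sum_bound b z"] unfolding abs_le_iff by linarith
    then show ?case using \<open>0 < 1 / ln b\<close> by simp
  qed
  ultimately have "integrable product_law F"
    by (rule Bochner_Integration.integrable_bound)
  then have "integral\<^sup>L product_law F \<le> integral\<^sup>L product_law (log_sum_bound b)"
    using R F_le by (rule integral_mono_AE)
  moreover have "mutual_information b S T X (\<lambda>\<omega>. shift (U \<omega>) (Z \<omega>)) = integral\<^sup>L product_law F"
    unfolding F_def by (rule mutual_information_eq_integral[OF b])
  ultimately show ?thesis by (simp add: integral_log_sum_bound)
qed

end

section \<open>The reads of one sequencer\<close>

text \<open>The view of one sequencer: the unknown individuals \<open>A\<close> whose fragments it receives, the known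
  individuals \<open>B\<close>, the SNP positions \<open>Ns\<close>, and the noise \<open>Z n\<close> of its read at position \<open>n\<close>.\<close>

locale pooled_reads = prob_space \<Omega>
  for \<Omega> :: "'w measure"
    and A B Ns :: "nat set"
    and p :: "nat \<Rightarrow> real"
    and X Y :: "nat \<Rightarrow> nat \<Rightarrow> 'w \<Rightarrow> real" and Z :: "nat \<Rightarrow> 'w \<Rightarrow> real" +
  assumes finite_A: "finite A" and finite_B: "finite B" and finite_Ns: "finite Ns"
    and p_range: "\<And>n. n \<in> Ns \<Longrightarrow> 0 \<le> p n \<and> p n \<le> 1"
    and X_values: "\<And>m n \<omega>. m \<in> A \<Longrightarrow> n \<in> Ns \<Longrightarrow> \<omega> \<in> space \<Omega> \<Longrightarrow> X m n \<omega> \<in> {-1, 1}"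
    and X_prob: "\<And>m n. m \<in> A \<Longrightarrow> n \<in> Ns \<Longrightarrow> prob {\<omega>\<in>space \<Omega>. X m n \<omega> = 1} = p n"
    and Y_values: "\<And>k n \<omega>. k \<in> B \<Longrightarrow> n \<in> Ns \<Longrightarrow> \<omega> \<in> space \<Omega> \<Longrightarrow> Y k n \<omega> \<in> {-1, 1}"
    and Y_prob: "\<And>k n. k \<in> B \<Longrightarrow> n \<in> Ns \<Longrightarrow> prob {\<omega>\<in>space \<Omega>. Y k n \<omega> = 1} = p n"
    and indep: "indep_vars (\<lambda>_. borel) (\<lambda>i. case i of Xi m n \<Rightarrow> X m n | Yi k n \<Rightarrow> Y k n | Zi n \<Rightarrow> Z n)
      ({Xi m n | m n. m \<in> A \<and> n \<in> Ns} \<union> {Yi k n | k n. k \<in> B \<and> n \<in> Ns} \<union> {Zi n | n. n \<in> Ns})"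
begin

definition "V i = (case i of Xi m n \<Rightarrow> X m n | Yi k n \<Rightarrow> Y k n | Zi n \<Rightarrow> Z n)"

definition "unknown_block = {Xi m n | m n. m \<in> A \<and> n \<in> Ns}"
definition "allele_block = unknown_block \<union> {Yi k n | k n. k \<in> B \<and> n \<in> Ns}"
definition "noise_block = {Zi n | n. n \<in> Ns}"
definition "indices = allele_block \<union> noise_block"
definition "pos_block n = (\<lambda>m. Xi m n) ` A \<union> (\<lambda>k. Yi k n) ` B"
definition "known_block n = (\<lambda>k. Yi k n) ` B"

definition "pooled n \<omega> = (\<Sum>m\<in>A. X m n \<omega>) + (\<Sum>k\<in>B. Y k n \<omega>)"
definition "known_sum n \<omega> = (\<Sum>k\<in>B. Y k n \<omega>)"
definition unknown_sum :: "nat \<Rightarrow> (nat \<times> nat \<Rightarrow> real) \<Rightarrow> real" where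
  "unknown_sum n x = (\<Sum>m\<in>A. x (m, n))"

definition "alleles \<omega> = (\<lambda>(m, n)\<in>A \<times> Ns. X m n \<omega>)"
definition "signal \<omega> = (\<lambda>n\<in>Ns. pooled n \<omega>)"
definition "noise \<omega> = (\<lambda>n\<in>Ns. Z n \<omega>)"
definition add_noise :: "(nat \<Rightarrow> real) \<Rightarrow> (nat \<Rightarrow> real) \<Rightarrow> nat \<Rightarrow> real" where
  "add_noise u z = (\<lambda>n\<in>Ns. u n + z n)"

definition "allele_patterns = PiE (A \<times> Ns) (\<lambda>_. {-1, 1::real})"
definition "pooled_values = (\<lambda>k. 2 * real k - real (card A + card B)) ` {0..card A + card B}"
definition "signal_values = PiE Ns (\<lambda>_. pooled_values)"

lemma indices_eq:
  "indices = {Xi m n | m n. m \<in> A \<and> n \<in> Ns} \<union> {Yi k n | k n. k \<in> B \<and> n \<in> Ns} \<union> {Zi n | n. n \<in> Ns}"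
  unfolding indices_def allele_block_def unknown_block_def noise_block_def by blast

lemma indep_V: "indep_vars (\<lambda>_. borel) V indices"
  using indep unfolding V_def indices_eq .

lemma V_measurable: "i \<in> indices \<Longrightarrow> V i \<in> borel_measurable \<Omega>"
  using indep_V unfolding indep_vars_def by auto

lemma
  assumes "n \<in> Ns"
  shows X_measurable[measurable]: "m \<in> A \<Longrightarrow> X m n \<in> borel_measurable \<Omega>"
    and Y_measurable[measurable]: "k \<in> B \<Longrightarrow> Y k n \<in> borel_measurable \<Omega>"
    and Z_measurable[measurable]: "Z n \<in> borel_measurable \<Omega>"
  using assms V_measurable[of "Xi m n"] V_measurable[of "Yi k n"] V_measurable[of "Zi n"]
  by (auto simp: V_def indices_eq)

lemma pos_block_subset: "n \<in> Ns \<Longrightarrow> pos_block n \<subseteq> indices"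
  unfolding pos_block_def indices_eq by auto

lemma card_pos_block: "card (pos_block n) = card A + card B"
  unfolding pos_block_def using finite_A finite_B
  by (subst card_Un_disjoint) (auto simp: card_image inj_on_def)

lemma card_known_block: "card (known_block n) = card B"
  unfolding known_block_def by (simp add: card_image inj_on_def)

lemma pooled_eq_sum_pos_block: "pooled n \<omega> = (\<Sum>i\<in>pos_block n. V i \<omega>)"
  unfolding pooled_def pos_block_def using finite_A finite_B
  by (subst sum.union_disjoint) (auto simp: sum.reindex inj_on_def V_def)

lemma known_sum_eq_sum_known_block: "known_sum n \<omega> = (\<Sum>i\<in>known_block n. V i \<omega>)"
  unfolding known_sum_def known_block_def by (simp add: sum.reindex inj_on_def V_def)

lemma pos_block_pm1:
  assumes "n \<in> Ns" "i \<in> pos_block n"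
  shows "\<And>\<omega>. \<omega> \<in> space \<Omega> \<Longrightarrow> V i \<omega> \<in> {-1, 1}" and "prob {\<omega>\<in>space \<Omega>. V i \<omega> = 1} = p n"
proof -
  from assms(2) consider (unknown) m where "m \<in> A" "i = Xi m n"
    | (known) k where "k \<in> B" "i = Yi k n"
    unfolding pos_block_def by blast
  then show "\<And>\<omega>. \<omega> \<in> space \<Omega> \<Longrightarrow> V i \<omega> \<in> {-1, 1}" and "prob {\<omega>\<in>space \<Omega>. V i \<omega> = 1} = p n"
    by (cases; use assms(1) X_values X_prob Y_values Y_prob in \<open>simp add: V_def\<close>)+
qed

lemma finite_pos_block: "finite (pos_block n)"
  using finite_A finite_B by (simp add: pos_block_def)

lemma
  assumes n: "n \<in> Ns"
  defines "P v \<equiv> prob {\<omega>\<in>space \<Omega>. pooled n \<omega> = v}"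
  shows integrable_log_prob_pooled: "integrable \<Omega> (\<lambda>\<omega>. log 2 (P (pooled n \<omega>)))"
    and expectation_log_prob_pooled:
      "(\<integral>\<omega>. log 2 (P (pooled n \<omega>)) \<partial>\<Omega>) = - binom_entropy (card A + card B) (p n)"
  using expectation_log_prob_sum_pm1[OF finite_pos_block
      indep_vars_subset[OF indep_V pos_block_subset[OF n]] pos_block_pm1[OF n]] p_range[OF n]
  unfolding P_def pooled_eq_sum_pos_block card_pos_block by auto

lemma
  assumes n: "n \<in> Ns"
  defines "P v \<equiv> prob {\<omega>\<in>space \<Omega>. known_sum n \<omega> = v}"
  shows integrable_log_prob_known_sum: "integrable \<Omega> (\<lambda>\<omega>. log 2 (P (known_sum n \<omega>)))"
    and expectation_log_prob_known_sum:
      "(\<integral>\<omega>. log 2 (P (known_sum n \<omega>)) \<partial>\<Omega>) = - binom_entropy (card B) (p n)"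
proof -
  have "known_block n \<subseteq> pos_block n" by (auto simp: known_block_def pos_block_def)
  moreover have "finite (known_block n)" using finite_B by (simp add: known_block_def)
  ultimately show "integrable \<Omega> (\<lambda>\<omega>. log 2 (P (known_sum n \<omega>)))"
    and "(\<integral>\<omega>. log 2 (P (known_sum n \<omega>)) \<partial>\<Omega>) = - binom_entropy (card B) (p n)"
    using expectation_log_prob_sum_pm1[of "known_block n" V "p n"] pos_block_pm1[OF n] p_range[OF n]
      indep_vars_subset[OF indep_V order_trans[OF _ pos_block_subset[OF n]]]
    unfolding P_def known_sum_eq_sum_known_block card_known_block by auto
qed

lemma alleles_eq_iff:
  "x \<in> allele_patterns \<Longrightarrow> alleles \<omega> = x \<longleftrightarrow> (\<forall>m\<in>A. \<forall>n\<in>Ns. X m n \<omega> = x (m, n))"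
  unfolding alleles_def allele_patterns_def by (auto simp: fun_eq_iff PiE_iff extensional_def)

lemma signal_eq_iff:
  "u \<in> signal_values \<Longrightarrow> signal \<omega> = u \<longleftrightarrow> (\<forall>n\<in>Ns. pooled n \<omega> = u n)"
  unfolding signal_def signal_values_def by (auto simp: fun_eq_iff PiE_iff extensional_def)

lemma pooled_in_pooled_values:
  assumes "n \<in> Ns" "\<omega> \<in> space \<Omega>"
  shows "pooled n \<omega> \<in> pooled_values"
  using sum_pm1_values[OF finite_pos_block[of n], of "\<lambda>i. V i \<omega>"] pos_block_pm1(1)[OF assms(1) _ assms(2)]
  unfolding pooled_eq_sum_pos_block pooled_values_def card_pos_block by auto

lemma measurable_alleles[measurable]: "alleles \<in> measurable \<Omega> (PiM (A \<times> Ns) (\<lambda>_. borel))"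
  unfolding alleles_def by (intro measurable_restrict) auto

lemma measurable_pooled[measurable]: "n \<in> Ns \<Longrightarrow> pooled n \<in> borel_measurable \<Omega>"
  unfolding pooled_def by measurable

lemma measurable_noise[measurable]: "noise \<in> measurable \<Omega> (PiM Ns (\<lambda>_. borel))"
  unfolding noise_def by (intro measurable_restrict) auto

lemma measurable_add_noise: "add_noise u \<in> measurable (PiM Ns (\<lambda>_. borel)) (PiM Ns (\<lambda>_. borel))"
  unfolding add_noise_def by (intro measurable_restrict) auto

lemma reads_eq_add_noise:
  "(\<lambda>\<omega>. \<lambda>n\<in>Ns. (\<Sum>m\<in>A. X m n \<omega>) + (\<Sum>k\<in>B. Y k n \<omega>) + Z n \<omega>) = (\<lambda>\<omega>. add_noise (signal \<omega>) (noise \<omega>))"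
  unfolding add_noise_def signal_def noise_def pooled_def by (auto simp: fun_eq_iff)

lemma measurable_reads: "(\<lambda>\<omega>. add_noise (signal \<omega>) (noise \<omega>)) \<in> measurable \<Omega> (PiM Ns (\<lambda>_. borel))"
  unfolding add_noise_def signal_def noise_def by (intro measurable_restrict) auto

lemma prob_signal_noise_indep:
  assumes x: "x \<in> allele_patterns" and u: "u \<in> signal_values" and C: "C \<in> sets (PiM Ns (\<lambda>_. borel))"
  shows "prob {\<omega>\<in>space \<Omega>. alleles \<omega> = x \<and> signal \<omega> = u \<and> noise \<omega> \<in> C} =
    prob {\<omega>\<in>space \<Omega>. alleles \<omega> = x \<and> signal \<omega> = u} * prob {\<omega>\<in>space \<Omega>. noise \<omega> \<in> C}"
proof -
  define Kb where "Kb b = (if b then allele_block else noise_block)" for b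
  define P where "P b r = (if b
      then (\<forall>m\<in>A. \<forall>n\<in>Ns. r (Xi m n) = x (m, n)) \<and>
        (\<forall>n\<in>Ns. (\<Sum>m\<in>A. r (Xi m n)) + (\<Sum>k\<in>B. r (Yi k n)) = u n)
      else (\<lambda>n\<in>Ns. r (Zi n)) \<in> C)" for b and r :: "rv_idx \<Rightarrow> real"
  have [simp]: "m \<in> A \<Longrightarrow> n \<in> Ns \<Longrightarrow> Xi m n \<in> allele_block"
    "k \<in> B \<Longrightarrow> n \<in> Ns \<Longrightarrow> Yi k n \<in> allele_block" "n \<in> Ns \<Longrightarrow> Zi n \<in> noise_block"
    for m k n by (auto simp: allele_block_def unknown_block_def noise_block_def)
  have "Measurable.pred (PiM allele_block (\<lambda>_. borel)) (P True)"
    unfolding P_def if_True using finite_A finite_B finite_Ns by measurable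
  moreover have "Measurable.pred (PiM noise_block (\<lambda>_. borel)) (P False)"
    unfolding P_def if_False using C by measurable
  ultimately have "Measurable.pred (PiM (Kb b) (\<lambda>_. borel)) (P b)" for b
    by (cases b) (simp_all add: Kb_def)
  moreover have "Kb b \<subseteq> indices" for b by (auto simp: Kb_def indices_def)
  moreover have "disjoint_family_on Kb UNIV"
    by (auto simp: disjoint_family_on_def Kb_def allele_block_def unknown_block_def noise_block_def)
  ultimately have indep_blocks: "prob {\<omega>\<in>space \<Omega>. \<forall>b\<in>UNIV. P b (\<lambda>i\<in>Kb b. V i \<omega>)} =
      (\<Prod>b\<in>UNIV. prob {\<omega>\<in>space \<Omega>. P b (\<lambda>i\<in>Kb b. V i \<omega>)})"
    by (intro prob_indep_blocks[OF indep_V]) auto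
  have P_True: "P True (\<lambda>i\<in>Kb True. V i \<omega>) \<longleftrightarrow> alleles \<omega> = x \<and> signal \<omega> = u" for \<omega>
    unfolding alleles_eq_iff[OF x] signal_eq_iff[OF u]
    by (auto simp: P_def Kb_def allele_block_def unknown_block_def V_def pooled_def)
  have P_False: "P False (\<lambda>i\<in>Kb False. V i \<omega>) \<longleftrightarrow> noise \<omega> \<in> C" for \<omega>
  proof -
    have "(\<lambda>n\<in>Ns. (\<lambda>i\<in>noise_block. V i \<omega>) (Zi n)) = noise \<omega>"
      by (auto simp: noise_def noise_block_def V_def fun_eq_iff)
    then show ?thesis by (simp add: P_def Kb_def)
  qed
  have "{\<omega>\<in>space \<Omega>. \<forall>b\<in>UNIV. P b (\<lambda>i\<in>Kb b. V i \<omega>)} =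
      {\<omega>\<in>space \<Omega>. alleles \<omega> = x \<and> signal \<omega> = u \<and> noise \<omega> \<in> C}"
    unfolding UNIV_bool using P_True P_False by auto
  moreover have "(\<Prod>b\<in>UNIV. prob {\<omega>\<in>space \<Omega>. P b (\<lambda>i\<in>Kb b. V i \<omega>)}) =
      prob {\<omega>\<in>space \<Omega>. alleles \<omega> = x \<and> signal \<omega> = u} * prob {\<omega>\<in>space \<Omega>. noise \<omega> \<in> C}"
    unfolding UNIV_bool using P_True P_False by simp
  ultimately show ?thesis using indep_blocks by simp
qed

lemma finite_allele_patterns: "finite allele_patterns"
  unfolding allele_patterns_def using finite_A finite_Ns by (simp add: finite_PiE)

lemma alleles_in_allele_patterns: "\<omega> \<in> space \<Omega> \<Longrightarrow> alleles \<omega> \<in> allele_patterns"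
  unfolding alleles_def allele_patterns_def using X_values by auto

lemma singleton_allele_pattern: "x \<in> allele_patterns \<Longrightarrow> {x} \<in> sets (PiM (A \<times> Ns) (\<lambda>_. borel))"
  unfolding allele_patterns_def using finite_A finite_Ns
  by (intro singleton_in_sets_PiM) (auto simp: PiE_iff)

lemma finite_signal_values: "finite signal_values"
  unfolding signal_values_def pooled_values_def using finite_Ns by (simp add: finite_PiE)

lemma signal_in_signal_values: "\<omega> \<in> space \<Omega> \<Longrightarrow> signal \<omega> \<in> signal_values"
  unfolding signal_def signal_values_def using pooled_in_pooled_values by auto

lemma signal_fibre: "u \<in> signal_values \<Longrightarrow> {\<omega>\<in>space \<Omega>. signal \<omega> = u} \<in> events"
  using finite_Ns by (simp add: signal_eq_iff) measurable

sublocale channel: independent_noise_channel \<Omega> "PiM (A \<times> Ns) (\<lambda>_. borel)" alleles allele_patterns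
  signal signal_values "PiM Ns (\<lambda>_. borel)" noise add_noise
  by (intro independent_noise_channel.intro independent_noise_channel_axioms.intro prob_space_axioms
      measurable_alleles finite_allele_patterns alleles_in_allele_patterns singleton_allele_pattern
      finite_signal_values signal_in_signal_values signal_fibre measurable_noise
      measurable_add_noise
      measurable_reads prob_signal_noise_indep)

lemma prob_signal_eq_prod:
  assumes u: "u \<in> signal_values"
  shows "channel.pU u = (\<Prod>n\<in>Ns. prob {\<omega>\<in>space \<Omega>. pooled n \<omega> = u n})"
proof -
  define P where "P n r = ((\<Sum>i\<in>pos_block n. r i) = u n)" for n and r :: "rv_idx \<Rightarrow> real"
  have "Measurable.pred (PiM (pos_block n) (\<lambda>_. borel)) (P n)" for n
    unfolding P_def by measurable
  moreover have "disjoint_family_on pos_block Ns"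
    by (auto simp: disjoint_family_on_def pos_block_def)
  ultimately have "prob {\<omega>\<in>space \<Omega>. \<forall>n\<in>Ns. P n (\<lambda>i\<in>pos_block n. V i \<omega>)} =
      (\<Prod>n\<in>Ns. prob {\<omega>\<in>space \<Omega>. P n (\<lambda>i\<in>pos_block n. V i \<omega>)})"
    using finite_Ns pos_block_subset by (intro prob_indep_blocks[OF indep_V]) auto
  moreover have "P n (\<lambda>i\<in>pos_block n. V i \<omega>) \<longleftrightarrow> pooled n \<omega> = u n" for n \<omega>
    unfolding P_def pooled_eq_sum_pos_block by simp
  ultimately show ?thesis unfolding channel.pU_def signal_eq_iff[OF u] by simp
qed

lemma prob_alleles_signal_eq_prod:
  assumes x: "x \<in> allele_patterns" and u: "u \<in> signal_values"
  shows "channel.pXU x u =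
    channel.pX x * (\<Prod>n\<in>Ns. prob {\<omega>\<in>space \<Omega>. known_sum n \<omega> = u n - unknown_sum n x})"
proof -
  \<comment> \<open>Given the unknown alleles \<open>x\<close>, the signal is \<open>u\<close> iff at each position the known alleles sum to
    \<open>u n - unknown_sum n x\<close>; these events and the unknown alleles involve disjoint independent blocks.\<close>
  define Kb where "Kb j = (case j of None \<Rightarrow> unknown_block | Some n \<Rightarrow> known_block n)" for j
  define P where "P j r = (case j of
      None \<Rightarrow> \<forall>m\<in>A. \<forall>n\<in>Ns. r (Xi m n) = x (m, n)
    | Some n \<Rightarrow> (\<Sum>i\<in>known_block n. r i) = u n - unknown_sum n x)" for j and r :: "rv_idx \<Rightarrow> real"
  define L where "L = insert None (Some ` Ns)"
  have [simp]: "m \<in> A \<Longrightarrow> n \<in> Ns \<Longrightarrow> Xi m n \<in> unknown_block" for m n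
    by (simp add: unknown_block_def)
  have "Measurable.pred (PiM unknown_block (\<lambda>_. borel)) (P None)"
    unfolding P_def option.case using finite_A finite_Ns by measurable
  moreover have "Measurable.pred (PiM (known_block n) (\<lambda>_. borel)) (P (Some n))" for n
    unfolding P_def option.case by measurable
  ultimately have "Measurable.pred (PiM (Kb j) (\<lambda>_. borel)) (P j)" for j
    by (cases j) (simp_all add: Kb_def)
  moreover have "Kb j \<subseteq> indices" if "j \<in> L" for j
    using that unfolding L_def Kb_def unknown_block_def known_block_def indices_eq by (cases j) auto
  moreover have "disjoint_family_on Kb L"
    by (auto simp: disjoint_family_on_def L_def Kb_def unknown_block_def known_block_def)
  ultimately have blocks: "prob {\<omega>\<in>space \<Omega>. \<forall>j\<in>L. P j (\<lambda>i\<in>Kb j. V i \<omega>)} =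
      (\<Prod>j\<in>L. prob {\<omega>\<in>space \<Omega>. P j (\<lambda>i\<in>Kb j. V i \<omega>)})"
    using finite_Ns by (intro prob_indep_blocks[OF indep_V]) (auto simp: L_def)
  have P_None: "P None (\<lambda>i\<in>Kb None. V i \<omega>) \<longleftrightarrow> alleles \<omega> = x" for \<omega>
    unfolding alleles_eq_iff[OF x] by (simp add: P_def Kb_def V_def)
  have P_Some: "P (Some n) (\<lambda>i\<in>Kb (Some n). V i \<omega>) \<longleftrightarrow> known_sum n \<omega> = u n - unknown_sum n x" for n \<omega>
    unfolding known_sum_eq_sum_known_block by (simp add: P_def Kb_def)
  have "pooled n \<omega> = unknown_sum n x + known_sum n \<omega>" if "alleles \<omega> = x" "n \<in> Ns" for n \<omega>
    using that alleles_eq_iff[OF x] by (simp add: pooled_def unknown_sum_def known_sum_def)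
  then have "{\<omega>\<in>space \<Omega>. \<forall>j\<in>L. P j (\<lambda>i\<in>Kb j. V i \<omega>)} = {\<omega>\<in>space \<Omega>. alleles \<omega> = x \<and> signal \<omega> = u}"
    unfolding L_def signal_eq_iff[OF u] by (auto simp: P_None P_Some)
  moreover have "(\<Prod>j\<in>L. prob {\<omega>\<in>space \<Omega>. P j (\<lambda>i\<in>Kb j. V i \<omega>)}) =
      channel.pX x * (\<Prod>n\<in>Ns. prob {\<omega>\<in>space \<Omega>. known_sum n \<omega> = u n - unknown_sum n x})"
    using finite_Ns unfolding L_def channel.pX_def by (simp add: P_None P_Some prod.reindex)
  ultimately show ?thesis using blocks unfolding channel.pXU_def by simp
qed

lemma log_ratio_eq_sum:
  assumes x: "x \<in> allele_patterns" and u: "u \<in> signal_values"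
  shows "channel.pXU x u * log 2 (channel.pXU x u / (channel.pX x * channel.pU u)) =
    channel.pXU x u * (\<Sum>n\<in>Ns. log 2 (prob {\<omega>\<in>space \<Omega>. known_sum n \<omega> = u n - unknown_sum n x}) -
      log 2 (prob {\<omega>\<in>space \<Omega>. pooled n \<omega> = u n}))"
proof (cases "channel.pXU x u = 0")
  case False
  define PW where "PW n = prob {\<omega>\<in>space \<Omega>. known_sum n \<omega> = u n - unknown_sum n x}" for n
  define PU where "PU n = prob {\<omega>\<in>space \<Omega>. pooled n \<omega> = u n}" for n
  have log_prod: "log 2 (\<Prod>n\<in>Ns. f n) = (\<Sum>n\<in>Ns. log 2 (f n))" if "\<And>n. n \<in> Ns \<Longrightarrow> f n \<noteq> 0" for f
    using that finite_Ns by (simp add: log_def ln_prod sum_divide_distrib)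
  have "0 \<le> channel.pXU x u" by (simp add: channel.pXU_def)
  then have "channel.pU u \<noteq> 0" using False channel.pXU_le_pU[OF u, of x] by linarith
  then have PU: "(\<Prod>n\<in>Ns. PU n) \<noteq> 0"
    unfolding PU_def prob_signal_eq_prod[OF u, symmetric] .
  have "channel.pX x * (\<Prod>n\<in>Ns. PW n) \<noteq> 0"
    using False unfolding PW_def prob_alleles_signal_eq_prod[OF x u] .
  then have pX: "channel.pX x \<noteq> 0" and PW: "(\<Prod>n\<in>Ns. PW n) \<noteq> 0" by auto
  have "log 2 (channel.pXU x u / (channel.pX x * channel.pU u)) =
      log 2 ((\<Prod>n\<in>Ns. PW n) / (\<Prod>n\<in>Ns. PU n))"
    using pX unfolding prob_alleles_signal_eq_prod[OF x u] prob_signal_eq_prod[OF u] PW_def PU_def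
    by simp
  also have "\<dots> = (\<Sum>n\<in>Ns. log 2 (PW n)) - (\<Sum>n\<in>Ns. log 2 (PU n))"
  proof -
    have "PU n \<noteq> 0" "PW n \<noteq> 0" if "n \<in> Ns" for n
      using PU PW that finite_Ns by (auto simp: prod_zero_iff)
    then show ?thesis using PU PW by (simp add: log_divide log_prod)
  qed
  finally show ?thesis unfolding PW_def PU_def by (simp add: sum_subtractf)
qed simp

lemma signal_information_eq:
  "channel.signal_information 2 =
    (\<Sum>n\<in>Ns. binom_entropy (card A + card B) (p n) - binom_entropy (card B) (p n))"
proof -
  define G where "G x u = (\<Sum>n\<in>Ns. log 2 (prob {\<omega>\<in>space \<Omega>. known_sum n \<omega> = u n - unknown_sum n x}) -
    log 2 (prob {\<omega>\<in>space \<Omega>. pooled n \<omega> = u n}))" for x u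
  have fibres: "{\<omega>\<in>space \<Omega>. (alleles \<omega>, signal \<omega>) = xu} \<in> events"
    if "xu \<in> allele_patterns \<times> signal_values" for xu
    using channel.XU_fibre[of "fst xu" "snd xu"] that by (cases xu) auto
  have "channel.signal_information 2 =
      (\<Sum>x\<in>allele_patterns. \<Sum>u\<in>signal_values. channel.pXU x u * G x u)"
    unfolding channel.signal_information_def G_def by (intro sum.cong refl log_ratio_eq_sum)
  also have "\<dots> = (\<Sum>xu\<in>allele_patterns \<times> signal_values.
      prob {\<omega>\<in>space \<Omega>. (alleles \<omega>, signal \<omega>) = xu} * case_prod G xu)"
    unfolding sum.cartesian_product channel.pXU_def by (intro sum.cong refl) auto
  also have "\<dots> = (\<integral>\<omega>. case_prod G (alleles \<omega>, signal \<omega>) \<partial>\<Omega>)"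
    using finite_allele_patterns finite_signal_values alleles_in_allele_patterns
      signal_in_signal_values fibres
    by (intro integral_finite_valued[symmetric]) auto
  also have "\<dots> = (\<integral>\<omega>. (\<Sum>n\<in>Ns. log 2 (prob {\<omega>'\<in>space \<Omega>. known_sum n \<omega>' = known_sum n \<omega>}) -
      log 2 (prob {\<omega>'\<in>space \<Omega>. pooled n \<omega>' = pooled n \<omega>})) \<partial>\<Omega>)"
    by (intro Bochner_Integration.integral_cong refl sum.cong)
      (auto simp: G_def signal_def pooled_def alleles_def unknown_sum_def known_sum_def)
  also have "\<dots> = (\<Sum>n\<in>Ns. binom_entropy (card A + card B) (p n) - binom_entropy (card B) (p n))"
    by (simp add: Bochner_Integration.integral_sum
        integrable_log_prob_pooled integrable_log_prob_known_sum
        expectation_log_prob_pooled expectation_log_prob_known_sum)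
  finally show ?thesis .
qed

theorem mutual_information_reads_le:
  "mutual_information 2 (PiM (A \<times> Ns) (\<lambda>_. borel)) (PiM Ns (\<lambda>_. borel))
     (\<lambda>\<omega>. \<lambda>(m, n)\<in>A \<times> Ns. X m n \<omega>)
     (\<lambda>\<omega>. \<lambda>n\<in>Ns. (\<Sum>m\<in>A. X m n \<omega>) + (\<Sum>k\<in>B. Y k n \<omega>) + Z n \<omega>)
   \<le> (\<Sum>n\<in>Ns. binom_entropy (card A + card B) (p n) - binom_entropy (card B) (p n))"
proof -
  have "(\<lambda>\<omega>. \<lambda>(m, n)\<in>A \<times> Ns. X m n \<omega>) = alleles" by (simp add: alleles_def fun_eq_iff)
  then show ?thesis
    using channel.mutual_information_le[of 2]
    unfolding reads_eq_add_noise signal_information_eq by simp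
qed

theorem mutual_information_rate_le:
  assumes rate: "\<And>n. n \<in> Ns \<Longrightarrow>
      (binom_entropy (card A + card B) (p n) - binom_entropy (card B) (p n)) / real (card A) \<le> \<beta>"
    and "0 \<le> \<beta>"
  shows "mutual_information 2 (PiM (A \<times> Ns) (\<lambda>_. borel)) (PiM Ns (\<lambda>_. borel))
     (\<lambda>\<omega>. \<lambda>(m, n)\<in>A \<times> Ns. X m n \<omega>)
     (\<lambda>\<omega>. \<lambda>n\<in>Ns. (\<Sum>m\<in>A. X m n \<omega>) + (\<Sum>k\<in>B. Y k n \<omega>) + Z n \<omega>)
   / (real (card A) * real (card Ns)) \<le> \<beta>"
proof (cases "card A = 0")
  case False
  then have "binom_entropy (card A + card B) (p n) - binom_entropy (card B) (p n) \<le>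
      real (card A) * \<beta>"
    if "n \<in> Ns" for n
    using rate[OF that] by (simp add: divide_le_eq mult.commute)
  then have "(\<Sum>n\<in>Ns. binom_entropy (card A + card B) (p n) - binom_entropy (card B) (p n)) \<le>
      real (card Ns) * (real (card A) * \<beta>)"
    using sum_mono[of Ns _ "\<lambda>_. real (card A) * \<beta>"] by simp
  then show ?thesis
    using mutual_information_reads_le \<open>0 \<le> \<beta>\<close> False
    by (cases "card Ns = 0") (auto simp: divide_le_eq mult_ac)
qed (use \<open>0 \<le> \<beta>\<close> in simp)

end

theorem theorem2:
  fixes \<Omega> :: "'w measure"
    and M K N :: nat
    and p :: "nat \<Rightarrow> real"
    and \<sigma> \<beta> :: real
    and X :: "nat \<Rightarrow> nat \<Rightarrow> 'w \<Rightarrow> real"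
    and Y :: "nat \<Rightarrow> nat \<Rightarrow> 'w \<Rightarrow> real"
    and Z :: "nat \<Rightarrow> nat \<Rightarrow> 'w \<Rightarrow> real"
  assumes P: "prob_space \<Omega>"
    and M2: "M \<ge> 2"
    and sigma_pos: "\<sigma> > 0"
    and beta: "0 < \<beta>" "\<beta> < 1"
    and p_range: "\<And>n. n \<in> {1..N} \<Longrightarrow> 0 \<le> p n \<and> p n \<le> 1"
    and X_vals: "\<And>m n \<omega>. m \<in> {1..M} \<Longrightarrow> n \<in> {1..N} \<Longrightarrow> \<omega> \<in> space \<Omega> \<Longrightarrow> X m n \<omega> \<in> {-1, 1}"
    and X_prob: "\<And>m n. m \<in> {1..M} \<Longrightarrow> n \<in> {1..N} \<Longrightarrow>
                   measure \<Omega> {\<omega> \<in> space \<Omega>. X m n \<omega> = 1} = p n"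
    and Y_vals: "\<And>k n \<omega>. k \<in> {1..K} \<Longrightarrow> n \<in> {1..N} \<Longrightarrow> \<omega> \<in> space \<Omega> \<Longrightarrow> Y k n \<omega> \<in> {-1, 1}"
    and Y_prob: "\<And>k n. k \<in> {1..K} \<Longrightarrow> n \<in> {1..N} \<Longrightarrow>
                   measure \<Omega> {\<omega> \<in> space \<Omega>. Y k n \<omega> = 1} = p n"
    and Z_normal: "\<And>s n. s \<in> {1..M} \<Longrightarrow> n \<in> {1..N} \<Longrightarrow>
                   distributed \<Omega> lborel (Z s n) (\<lambda>x. ennreal (normal_density 0 \<sigma> x))"
    and indep: "\<And>s. s \<in> {1..M} \<Longrightarrow>
       prob_space.indep_vars \<Omega> (\<lambda>_. borel)
         (\<lambda>i. case i of Xi m n \<Rightarrow> X m n | Yi k n \<Rightarrow> Y k n | Zi n \<Rightarrow> Z s n)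
         ({Xi m n | m n. m \<in> {1..M} \<and> n \<in> {1..N}}
          \<union> {Yi k n | k n. k \<in> {1..K} \<and> n \<in> {1..N}}
          \<union> {Zi n | n. n \<in> {1..N}})"
    and hyp: "\<And>n. n \<in> {1..N} \<Longrightarrow>
       (binom_entropy (M - 1 + K) (p n) - binom_entropy K (p n)) / real (M - 1) \<le> \<beta>"
  shows "\<forall>s \<in> {1..M}.
     prob_space.mutual_information \<Omega> 2
        (PiM (({1..M} - {s}) \<times> {1..N}) (\<lambda>_. borel))
        (PiM {1..N} (\<lambda>_. borel))
        (\<lambda>\<omega>. \<lambda>(m, n) \<in> ({1..M} - {s}) \<times> {1..N}. X m n \<omega>)
        (\<lambda>\<omega>. \<lambda>n \<in> {1..N}.
            (\<Sum>m \<in> {1..M} - {s}. X m n \<omega>) + (\<Sum>k \<in> {1..K}. Y k n \<omega>) + Z s n \<omega>)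
      / (real (card ({1..M} - {s})) * real N) \<le> \<beta>"
proof (intro ballI, goal_cases)
  case (1 s)
  interpret prob_space \<Omega> by (rule P)
  interpret pooled_reads \<Omega> "{1..M} - {s}" "{1..K}" "{1..N}" p X Y "Z s"
    using p_range X_vals X_prob Y_vals Y_prob
    by unfold_locales (auto intro!: indep_vars_subset[OF indep[OF 1]])
  have card: "card ({1..M} - {s}) = M - 1" using 1 by simp
  show ?case
    using mutual_information_rate_le[of \<beta>] hyp beta unfolding card card_atLeastAtMost by simp
qed

end
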